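(* Let $p\ge 1$, $\alpha\ge 1$ and $f\in\mathcal{T}_p^{(\alpha)}(t^\alpha)$. Then $f$ (has a representative which) is continuous on $\mathbb{R}^+=(0,\infty)$, $\lim_{t\to\infty}f(t)=0$, and $$\sup_{t>0} t^{1/p}|f(t)|\le C_{\alpha,p}\|f\|_{\alpha,p},$$ where the constant $C_{\alpha,p}$ does not depend on $f$.
   Context: $\mathcal{S}_+$ denotes the Schwartz class on $[0,\infty)$. For $\alpha>0$ and $f\in\mathcal{S}_+$, the Weyl fractional integral is $W_+^{-\alpha}f(t)=\frac{1}{\Gamma(\alpha)}\int_t^\infty (s-t)^{\alpha-1}f(s)\,ds$ ($t>0$), and the Weyl fractional derivative is $W_+^{\alpha}f(t)=(-1)^n\frac{d^n}{dt^n}W_+^{-(n-\alpha)}f(t)$ with $n=[\alpha]+1$ (so $W_+^1f=-f'$). For $\alpha>0$ and $1\le p<\infty$, $\mathcal{T}_p^{(\alpha)}(t^\alpha)$ is the Banach space obtained as the completion of $\mathcal{S}_+$ in the norm $\|f\|_{\alpha,p}=\frac{1}{\Gamma(\alpha+1)}\left(\int_0^\infty |W_+^\alpha f(t)|^p t^{\alpha p}\,dt\right)^{1/p}$; it embeds continuously into $L^p(\mathbb{R}^+)$, so its elements are (a.e. defined) functions on $(0,\infty)$. *)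

theory Defs
  imports "HOL-Analysis.Analysis"
begin

text \<open>Schwartz class on [0,\<infinity>): smooth on [0,\<infinity>) (one-sided derivative at 0),
  with t^m f^(k)(t) bounded on [0,\<infinity>) for all m, k. Values on negative reals are irrelevant.\<close>
definition schwartz_plus :: "(real \<Rightarrow> complex) \<Rightarrow> bool" where
  "schwartz_plus f \<longleftrightarrow>
     (\<exists>D :: nat \<Rightarrow> real \<Rightarrow> complex.
        (\<forall>t\<ge>0. D 0 t = f t) \<and>
        (\<forall>k t. t \<ge> 0 \<longrightarrow> (D k has_vector_derivative D (Suc k) t) (at t within {0..})) \<and>
        (\<forall>k m. bounded ((\<lambda>t. (t ^ m) *\<^sub>R D k t) ` {0..})))"

definition weyl_int :: "real \<Rightarrow> (real \<Rightarrow> complex) \<Rightarrow> real \<Rightarrow> complex" where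
  "weyl_int \<alpha> f t = (1 / Gamma \<alpha>) *\<^sub>R (LINT s:{t..}|lborel. ((s - t) powr (\<alpha> - 1)) *\<^sub>R f s)"

definition nth_vderiv :: "nat \<Rightarrow> (real \<Rightarrow> complex) \<Rightarrow> real \<Rightarrow> complex" where
  "nth_vderiv n g = ((\<lambda>h t. vector_derivative h (at t)) ^^ n) g"

definition weyl_deriv :: "real \<Rightarrow> (real \<Rightarrow> complex) \<Rightarrow> real \<Rightarrow> complex" where
  "weyl_deriv \<alpha> f t =
     (let n = nat \<lfloor>\<alpha>\<rfloor> + 1 in
        ((-1) ^ n) *\<^sub>R nth_vderiv n (weyl_int (real n - \<alpha>) f) t)"

definition wnorm :: "real \<Rightarrow> real \<Rightarrow> (real \<Rightarrow> complex) \<Rightarrow> real" where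
  "wnorm \<alpha> p f = (1 / Gamma (\<alpha> + 1)) *
     (LINT t:{0<..}|lborel. norm (weyl_deriv \<alpha> f t) powr p * t powr (\<alpha> * p)) powr (1 / p)"

text \<open>\<phi> is a sequence in S_+, Cauchy for \<parallel>.\<parallel>_{\<alpha>,p}, converging in L^p(0,\<infinity>) to f:
  it represents the element f of the completion T_p^{(\<alpha>)}(t^\<alpha>) (viewed inside L^p).\<close>
definition T_rep :: "real \<Rightarrow> real \<Rightarrow> (nat \<Rightarrow> real \<Rightarrow> complex) \<Rightarrow> (real \<Rightarrow> complex) \<Rightarrow> bool" where
  "T_rep \<alpha> p \<phi> f \<longleftrightarrow>
     (\<forall>n. schwartz_plus (\<phi> n)) \<and>
     (\<forall>\<epsilon>>0. \<exists>N. \<forall>m\<ge>N. \<forall>n\<ge>N. wnorm \<alpha> p (\<lambda>t. \<phi> m t - \<phi> n t) < \<epsilon>) \<and>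
     set_borel_measurable lborel {0<..} f \<and>
     (\<lambda>n. \<integral>\<^sup>+ t\<in>{0<..}. ennreal (norm (\<phi> n t - f t) powr p) \<partial>lborel) \<longlonglongrightarrow> 0"

definition T_space :: "real \<Rightarrow> real \<Rightarrow> (real \<Rightarrow> complex) set" where
  "T_space \<alpha> p = {f. \<exists>\<phi>. T_rep \<alpha> p \<phi> f}"

definition T_norm_seq :: "real \<Rightarrow> real \<Rightarrow> (nat \<Rightarrow> real \<Rightarrow> complex) \<Rightarrow> real" where
  "T_norm_seq \<alpha> p \<phi> = lim (\<lambda>n. wnorm \<alpha> p (\<phi> n))"

end

theory Submission
  imports Defs
begin

text \<open>
  For a Schwartz function \<open>\<psi>\<close> and \<open>\<alpha> \<ge> 1\<close> the Weyl derivative can be inverted,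
  \<open>\<psi> t = \<Gamma>(\<alpha>)\<^sup>-\<^sup>1 \<integral>\<^sub>t\<^sup>\<infinity> (s - t)\<^sup>\<alpha>\<^sup>-\<^sup>1 W\<^sup>\<alpha> \<psi> s ds\<close>: this follows from the
  semigroup law of the Weyl kernels (a Beta integral) and Taylor's formula at infinity. Since
  \<open>(s - t)\<^sup>\<alpha>\<^sup>-\<^sup>1 \<le> s\<^sup>\<alpha>\<^sup>-\<^sup>1\<close>, Hoelder's inequality on \<open>[t,\<infinity>)\<close> against \<open>1/s\<close> yields
  \<open>t\<^sup>1\<^sup>/\<^sup>p |\<psi> t| \<le> \<alpha> C\<^sub>p \<parallel>\<psi>\<parallel>\<^sub>\<alpha>\<^sub>,\<^sub>p\<close>. Applied to the differences of a defining Cauchy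
  sequence this makes the sequence uniformly Cauchy on every \<open>[a,\<infinity>)\<close> with \<open>a > 0\<close>. The limit
  is therefore continuous and vanishes at infinity, it agrees almost everywhere with the
  \<open>L\<^sup>p\<close>-limit by Fatou's lemma, and it inherits the bound because \<open>\<parallel>\<cdot>\<parallel>\<^sub>\<alpha>\<^sub>,\<^sub>p\<close> converges along
  the sequence (Minkowski's inequality).
\<close>

section \<open>Power kernels on half-lines\<close>

lemma set_integrable_inverse_square: "set_integrable lborel {0..} (\<lambda>s::real. 1 / (1+s)^2)"
proof -
  have "((\<lambda>x::real. 1 / x ^ 2) has_integral 1 / (real (2 - 1) * 1 ^ (2 - 1))) {1..}"
    by (rule has_integral_inverse_power_to_inf) auto
  hence "(\<lambda>x::real. 1 / x ^ 2) absolutely_integrable_on {1..}"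
    by (intro nonnegative_absolutely_integrable_1) (auto simp: integrable_on_def)
  hence "set_integrable lborel {1..} (\<lambda>x::real. 1 / x ^ 2)"
    by (simp add: absolutely_integrable_on_def set_integrable_def integrable_completion)
  hence "integrable lborel (\<lambda>x. indicator {1..} x *\<^sub>R (1 / x ^ 2 :: real))"
    by (simp add: set_integrable_def)
  from lborel_integrable_real_affine[OF this, of 1 1]
  have "integrable lborel (\<lambda>x. indicator {1..} (1 + 1 * x) *\<^sub>R (1 / (1 + 1 * x) ^ 2 :: real))" by simp
  also have "(\<lambda>x. indicator {1..} (1 + 1 * x) *\<^sub>R (1 / (1 + 1 * x) ^ 2 :: real)) = (\<lambda>x. indicator {0..} x *\<^sub>R (1 / (1 + x) ^ 2))"
    by (auto simp: indicator_def fun_eq_iff)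
  finally show ?thesis by (simp add: set_integrable_def)
qed

lemma set_integrable_powr_unit_interval:
  assumes "\<gamma> > 0"
  shows "set_integrable lborel {t..t+1} (\<lambda>s::real. (s - t) powr (\<gamma> - 1))"
proof -
  have "(\<lambda>x::real. x powr (\<gamma> - 1)) integrable_on {0..1}"
    by (rule integrable_on_powr_from_0) (use assms in auto)
  hence "(\<lambda>x::real. x powr (\<gamma> - 1)) absolutely_integrable_on {0..1}"
    by (intro nonnegative_absolutely_integrable_1) auto
  hence "integrable lborel (\<lambda>x. indicator {0..1} x *\<^sub>R (x powr (\<gamma> - 1) :: real))"
    by (simp add: absolutely_integrable_on_def set_integrable_def integrable_completion)
  from lborel_integrable_real_affine[OF this, of 1 "-t"]
  have "integrable lborel (\<lambda>x. indicator {0..1} (-t + 1 * x) *\<^sub>R ((-t + 1 * x) powr (\<gamma> - 1) :: real))" by simp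
  also have "(\<lambda>x. indicator {0..1} (-t + 1 * x) *\<^sub>R ((-t + 1 * x) powr (\<gamma> - 1) :: real)) = (\<lambda>x. indicator {t..t+1} x *\<^sub>R ((x - t) powr (\<gamma> - 1)))"
    by (auto simp: indicator_def fun_eq_iff)
  finally show ?thesis by (simp add: set_integrable_def)
qed

lemma decay_bound_nonneg: "\<forall>y\<ge>0. norm (g y) \<le> M / (1+y)^m \<Longrightarrow> M \<ge> (0::real)"
proof -
  assume a: "\<forall>y\<ge>0. norm (g y) \<le> M / (1+y)^m"
  have "norm (g 0) \<le> M / (1+0)^m" using a by blast
  hence "norm (g 0) \<le> M" by simp
  thus ?thesis by (meson norm_ge_zero order_trans)
qed

lemma powr_kernel_le_power:
  fixes s t \<gamma> :: real and N :: nat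
  assumes "\<gamma> - 1 \<le> real N" "s \<ge> t" "t \<ge> 0" "s > t + 1"
  shows "(s - t) powr (\<gamma> - 1) \<le> (1 + s) ^ N"
proof (cases "\<gamma> \<ge> 1")
  case True
  have "(s - t) powr (\<gamma> - 1) \<le> (1 + s) powr (\<gamma> - 1)"
    using assms True by (intro powr_mono2) auto
  also have "\<dots> \<le> (1 + s) powr (real N)"
    using assms by (intro powr_mono) auto
  also have "\<dots> = (1 + s) ^ N" using assms by (simp add: powr_realpow)
  finally show ?thesis .
next
  case False
  have "(s - t) powr (\<gamma> - 1) \<le> 1"
  proof -
    have "s - t \<ge> 1" "\<gamma> - 1 \<le> 0" using assms False by auto
    thus ?thesis by (metis powr_nonneg_iff powr_zero_eq_one powr_mono)
  qed
  also have "1 \<le> (1 + s) ^ N" using assms by (intro one_le_power) auto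
  finally show ?thesis .
qed

lemma power_mult_decay_le:
  fixes s :: real and N m :: nat
  assumes "s \<ge> 0" "N + 2 \<le> m" "M \<ge> 0"
  shows "(1 + s) ^ N * (M / (1 + s) ^ m) \<le> M / (1 + s)^2"
proof -
  have "(1+s)^m = (1+s)^N * (1+s)^(m - N)"
    using assms by (simp flip: power_add)
  then have "(1 + s) ^ N * (M / (1 + s) ^ m) = M / (1+s)^(m-N)"
    using assms by simp
  also have "\<dots> \<le> M / (1+s)^2"
    using assms by (intro divide_left_mono power_increasing mult_pos_pos) auto
  finally show ?thesis .
qed

lemma set_integrable_powr_kernel:
  fixes g :: "real \<Rightarrow> complex"
  assumes \<gamma>: "\<gamma> > 0" and g: "g \<in> borel_measurable borel" and dec: "\<forall>y\<ge>0. norm (g y) \<le> M / (1+y)^m"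
   and N: "\<gamma> - 1 \<le> real N" "N + 2 \<le> m" and t: "t \<ge> 0"
  shows "set_integrable lborel {t..} (\<lambda>s. (s - t) powr (\<gamma>-1) *\<^sub>R g s)"
proof -
  have M0: "M \<ge> 0" using dec by (rule decay_bound_nonneg)
  let ?f = "\<lambda>s. M * (indicator {t..t+1} s *\<^sub>R (s-t) powr (\<gamma>-1)) + M * (indicator {0..} s *\<^sub>R (1/(1+s)^2))"
  have i1: "integrable lborel (\<lambda>s. indicator {t..t+1} s *\<^sub>R (s-t) powr (\<gamma>-1))"
    using set_integrable_powr_unit_interval[OF \<gamma>, of t] by (simp add: set_integrable_def)
  have i2: "integrable lborel (\<lambda>s. indicator {0..} s *\<^sub>R (1/(1+s)^2::real))"
    using set_integrable_inverse_square by (simp add: set_integrable_def)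
  have fi: "integrable lborel ?f"
    by (rule Bochner_Integration.integrable_add[OF integrable_mult_right[OF i1] integrable_mult_right[OF i2]])
  show ?thesis unfolding set_integrable_def
  proof (rule Bochner_Integration.integrable_bound[OF fi _ AE_I2])
    show "(\<lambda>x. indicator {t..} x *\<^sub>R ((x - t) powr (\<gamma> - 1) *\<^sub>R g x)) \<in> borel_measurable lborel"
      using g by measurable
  next
    fix s :: real
    show "norm (indicator {t..} s *\<^sub>R ((s - t) powr (\<gamma> - 1) *\<^sub>R g s)) \<le> norm (?f s)"
    proof (cases "s \<ge> t")
      case False thus ?thesis by simp
    next
      case True
      have f0: "?f s \<ge> 0" using M0 by (auto simp: indicator_def)
      have gs: "norm (g s) \<le> M / (1+s)^m" using dec True t by auto
      have "norm (indicator {t..} s *\<^sub>R ((s - t) powr (\<gamma> - 1) *\<^sub>R g s)) = (s-t) powr (\<gamma>-1) * norm (g s)"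
        using True by simp
      also have "\<dots> \<le> ?f s"
      proof (cases "s \<le> t + 1")
        case True
        have p1: "(1+s)^m \<ge> 1" using \<open>t \<le> s\<close> t by (intro one_le_power) auto
        have "M / (1+s)^m \<le> M / 1" using M0 p1 by (intro divide_left_mono) auto
        hence "M / (1+s)^m \<le> M" by simp
        hence "(s-t) powr (\<gamma>-1) * norm (g s) \<le> (s-t) powr (\<gamma>-1) * M"
          using gs by (intro mult_left_mono) auto
        also have "\<dots> \<le> ?f s" using True \<open>t \<le> s\<close> t M0 by (auto simp: indicator_def)
        finally show ?thesis .
      next
        case False
        have "(s-t) powr (\<gamma>-1) * norm (g s) \<le> (1+s)^N * (M / (1+s)^m)"
          using powr_kernel_le_power[OF N(1) \<open>t \<le> s\<close> t] False gs t \<open>t \<le> s\<close> by (intro mult_mono) auto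
        also have "\<dots> \<le> M / (1+s)^2" using power_mult_decay_le[OF _ N(2) M0, of s] t \<open>t \<le> s\<close> by auto
        also have "\<dots> \<le> ?f s" using False \<open>t \<le> s\<close> t M0 by (auto simp: indicator_def)
        finally show ?thesis .
      qed
      finally show ?thesis using f0 by simp
    qed
  qed
qed

lemma set_integrable_decay:
  fixes g :: "real \<Rightarrow> complex"
  assumes g[measurable]: "g \<in> borel_measurable borel" and dec: "\<forall>y\<ge>0. norm (g y) \<le> M / (1+y)^2" and t: "t \<ge> 0"
  shows "set_integrable lborel {t..} g"
proof -
  have M0: "M \<ge> 0" using dec by (rule decay_bound_nonneg)
  have i2: "integrable lborel (\<lambda>s. M * (indicator {0..} s *\<^sub>R (1/(1+s)^2::real)))"
    using set_integrable_inverse_square by (intro integrable_mult_right) (simp add: set_integrable_def)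
  show ?thesis unfolding set_integrable_def
  proof (rule Bochner_Integration.integrable_bound[OF i2 _ AE_I2])
    show "(\<lambda>x. indicator {t..} x *\<^sub>R g x) \<in> borel_measurable lborel" by measurable
  next
    fix s :: real
    show "norm (indicator {t..} s *\<^sub>R g s) \<le> norm (M * (indicator {0..} s *\<^sub>R (1/(1+s)^2::real)))"
      using dec t M0 by (auto simp: indicator_def)
  qed
qed

lemma set_integral_powr_0:
  fixes g :: "real \<Rightarrow> complex"
  assumes g[measurable]: "g \<in> borel_measurable borel"
  shows "(LINT u:{t..}|lborel. (u-t) powr 0 *\<^sub>R g u) = (LINT u:{t..}|lborel. g u)"
  unfolding set_lebesgue_integral_def
proof (rule integral_cong_AE)
  show "AE x in lborel. indicator {t..} x *\<^sub>R (x - t) powr 0 *\<^sub>R g x = indicator {t..} x *\<^sub>R g x"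
    using AE_lborel_singleton[of t] by eventually_elim auto
qed measurable

lemma Beta_1_right:
  fixes x :: real
  assumes "x > 0"
  shows "Beta x 1 = 1 / x"
proof -
  have "x \<notin> \<int>\<^sub>\<le>\<^sub>0" using assms nonpos_Ints_nonpos by force
  then have "Gamma (x + 1) = x * Gamma x" by (rule Gamma_plus1)
  with Gamma_real_pos[OF assms] show ?thesis by (simp add: Beta_def)
qed

lemma Beta_integral_shifted:
  fixes \<gamma> \<delta> t u :: real
  assumes g: "\<gamma> > 0" and d: "\<delta> > 0" and tu: "t < u"
  shows "set_integrable lborel {t..u} (\<lambda>s. (s-t) powr (\<gamma>-1) * (u-s) powr (\<delta>-1))"
    and "(LINT s:{t..u}|lborel. (s-t) powr (\<gamma>-1) * (u-s) powr (\<delta>-1)) = Beta \<gamma> \<delta> * (u-t) powr (\<gamma>+\<delta>-1)"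
proof -
  define c where "c = u - t"
  have c: "c > 0" using tu by (simp add: c_def)
  define h where "h = (\<lambda>s. indicator {t..u} s * ((s-t) powr (\<gamma>-1) * (u-s) powr (\<delta>-1)))"
  have I0: "set_integrable lborel {0..1} (\<lambda>x. x powr (\<gamma> - 1) * (1 - x) powr (\<delta> - 1))"
    by (rule integrable_Beta[OF g d])
  have V0: "(LINT x:{0..1}|lborel. x powr (\<gamma> - 1) * (1 - x) powr (\<delta> - 1)) = Beta \<gamma> \<delta>"
    using set_borel_integral_eq_integral(2)[OF I0] has_integral_Beta_real[OF g d]
    by (simp add: integral_unique)
  have hx: "h (t + c * x) = c powr (\<gamma>+\<delta>-2) * (indicator {0..1} x * (x powr (\<gamma> - 1) * (1 - x) powr (\<delta> - 1)))" for x
  proof (cases "x \<in> {0..1}")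
    case True
    have "c * x \<le> c * 1" using True c by (intro mult_left_mono) auto
    moreover have "t + c = u" by (simp add: c_def)
    moreover have "0 \<le> c * x" using True c by auto
    ultimately have "t + c * x \<in> {t..u}" by auto
    moreover have "u - (t + c*x) = c * (1 - x)" by (simp add: c_def algebra_simps)
    ultimately have "h (t + c*x) = (c*x) powr (\<gamma>-1) * (c * (1-x)) powr (\<delta>-1)"
      by (simp add: h_def)
    also have "\<dots> = c powr (\<gamma>-1) * c powr (\<delta>-1) * (x powr (\<gamma> - 1) * (1 - x) powr (\<delta> - 1))"
      using True c by (simp add: powr_mult)
    also have "c powr (\<gamma>-1) * c powr (\<delta>-1) = c powr (\<gamma>+\<delta>-2)"
      by (simp add: powr_add[symmetric])
    finally show ?thesis using True by simp
  next
    case False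
    have "t + c * x \<notin> {t..u}"
    proof
      assume "t + c * x \<in> {t..u}"
      hence "0 \<le> c * x" "c * x \<le> c * 1" by (auto simp: c_def)
      hence "0 \<le> x" "x \<le> 1" using c by (auto simp: zero_le_mult_iff)
      thus False using False by auto
    qed
    thus ?thesis using False by (simp add: h_def)
  qed
  have hint: "integrable lborel (\<lambda>x. h (t + c * x))"
    unfolding hx using I0 by (intro integrable_mult_right) (simp add: set_integrable_def)
  hence "integrable lborel h"
    using lborel_integrable_real_affine_iff[of c h t] c by simp
  thus "set_integrable lborel {t..u} (\<lambda>s. (s-t) powr (\<gamma>-1) * (u-s) powr (\<delta>-1))"
    by (simp add: set_integrable_def h_def)
  have "(LINT s:{t..u}|lborel. (s-t) powr (\<gamma>-1) * (u-s) powr (\<delta>-1)) = integral\<^sup>L lborel h"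
    by (simp add: set_lebesgue_integral_def h_def)
  also have "\<dots> = \<bar>c\<bar> *\<^sub>R integral\<^sup>L lborel (\<lambda>x. h (t + c * x))"
    using lborel_integral_real_affine[of c h t] c by simp
  also have "\<dots> = c * (c powr (\<gamma>+\<delta>-2) * Beta \<gamma> \<delta>)"
    unfolding hx using c V0 by (simp add: set_lebesgue_integral_def)
  also have "\<dots> = Beta \<gamma> \<delta> * (u-t) powr (\<gamma>+\<delta>-1)"
  proof -
    have "c * c powr (\<gamma>+\<delta>-2) = c powr (\<gamma>+\<delta>-1)"
      using c by (simp add: powr_add[symmetric] powr_mult_base)
    thus ?thesis by (simp add: c_def mult_ac)
  qed
  finally show "(LINT s:{t..u}|lborel. (s-t) powr (\<gamma>-1) * (u-s) powr (\<delta>-1)) = Beta \<gamma> \<delta> * (u-t) powr (\<gamma>+\<delta>-1)" .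
qed

lemma Beta_integral_indicator:
  fixes \<gamma> \<delta> t u :: real
  assumes g: "\<gamma> > 0" and d: "\<delta> > 0"
  shows "integrable lborel (\<lambda>s. indicator {t..u} s * ((s-t) powr (\<gamma>-1) * (u-s) powr (\<delta>-1)))"
    and "(LBINT s. indicator {t..u} s * ((s-t) powr (\<gamma>-1) * (u-s) powr (\<delta>-1)))
           = indicator {t..} u * (Beta \<gamma> \<delta> * (u-t) powr (\<gamma>+\<delta>-1))"
proof (atomize (full), cases "t < u")
  case True
  then show "integrable lborel (\<lambda>s. indicator {t..u} s * ((s-t) powr (\<gamma>-1) * (u-s) powr (\<delta>-1))) \<and>
      (LBINT s. indicator {t..u} s * ((s-t) powr (\<gamma>-1) * (u-s) powr (\<delta>-1))) = indicator {t..} u * (Beta \<gamma> \<delta> * (u-t) powr (\<gamma>+\<delta>-1))"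
    using Beta_integral_shifted[OF g d True]
    by (simp add: set_integrable_def set_lebesgue_integral_def)
next
  case False
  then have "(\<lambda>s. indicator {t..u} s * ((s-t) powr (\<gamma>-1) * (u-s) powr (\<delta>-1))) = (\<lambda>_. 0)"
    by (auto simp: fun_eq_iff indicator_def)
  moreover have "indicator {t..} u * (Beta \<gamma> \<delta> * (u-t) powr (\<gamma>+\<delta>-1)) = 0"
    using False by (cases "u = t") (auto simp: indicator_def)
  ultimately show "integrable lborel (\<lambda>s. indicator {t..u} s * ((s-t) powr (\<gamma>-1) * (u-s) powr (\<delta>-1))) \<and>
      (LBINT s. indicator {t..u} s * ((s-t) powr (\<gamma>-1) * (u-s) powr (\<delta>-1))) = indicator {t..} u * (Beta \<gamma> \<delta> * (u-t) powr (\<gamma>+\<delta>-1))"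
    by simp
qed

lemma powr_kernel_semigroup:
  fixes G :: "real \<Rightarrow> complex" and \<gamma> \<delta> t M :: real and N m :: nat
  assumes g: "\<gamma> > 0" and d: "\<delta> > 0" and Gm[measurable]: "G \<in> borel_measurable borel"
    and dec: "\<forall>y\<ge>0. norm (G y) \<le> M / (1+y)^m"
    and N: "\<gamma> + \<delta> - 1 \<le> real N" "N + 2 \<le> m" and t: "t \<ge> 0"
  shows "set_integrable lborel {t..} (\<lambda>s. (s-t) powr (\<gamma>-1) *\<^sub>R (LINT u:{s..}|lborel. (u-s) powr (\<delta>-1) *\<^sub>R G u))"
    and "(LINT s:{t..}|lborel. (s-t) powr (\<gamma>-1) *\<^sub>R (LINT u:{s..}|lborel. (u-s) powr (\<delta>-1) *\<^sub>R G u))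
          = Beta \<gamma> \<delta> *\<^sub>R (LINT u:{t..}|lborel. (u-t) powr (\<gamma>+\<delta>-1) *\<^sub>R G u)"
proof -
  define F where "F = (\<lambda>u s. if t \<le> s \<and> s \<le> u then ((s-t) powr (\<gamma>-1) * (u-s) powr (\<delta>-1)) *\<^sub>R G u else 0)"
  have Fm: "(\<lambda>(u,s). F u s) \<in> borel_measurable (lborel \<Otimes>\<^sub>M lborel)"
    unfolding F_def by measurable
  have K: "set_integrable lborel {t..} (\<lambda>u. (u-t) powr (\<gamma>+\<delta>-1) *\<^sub>R G u)"
    using set_integrable_powr_kernel[OF _ Gm dec _ N(2) t, of "\<gamma>+\<delta>"] N(1) g d by simp
  have F_eq: "F u = (\<lambda>s. (indicator {t..u} s * ((s-t) powr (\<gamma>-1) * (u-s) powr (\<delta>-1))) *\<^sub>R G u)" for u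
    by (auto simp: F_def fun_eq_iff indicator_def)
  note Beta = Beta_integral_indicator[OF g d]
  have inner: "(LBINT s. F u s) = (indicator {t..} u * (Beta \<gamma> \<delta> * (u-t) powr (\<gamma>+\<delta>-1))) *\<^sub>R G u"
    and inner_int: "integrable lborel (F u)" for u
    unfolding F_eq using Beta[of t u] by (simp_all add: integrable_scaleR_left)
  have inner_norm: "(LBINT s. norm (F u s)) = indicator {t..} u * (Beta \<gamma> \<delta> * (u-t) powr (\<gamma>+\<delta>-1)) * norm (G u)" for u
  proof -
    have "(\<lambda>s. norm (F u s)) = (\<lambda>s. (indicator {t..u} s * ((s-t) powr (\<gamma>-1) * (u-s) powr (\<delta>-1))) * norm (G u))"
      by (auto simp: F_def fun_eq_iff indicator_def)
    then show ?thesis using Beta[of t u] by simp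
  qed
  have Fint: "integrable (lborel \<Otimes>\<^sub>M lborel) (\<lambda>(u,s). F u s)"
  proof (rule lborel_pair.Fubini_integrable)
    show "(\<lambda>(u,s). F u s) \<in> borel_measurable (lborel \<Otimes>\<^sub>M lborel)" by (rule Fm)
    have ia: "integrable lborel (\<lambda>u. Beta \<gamma> \<delta> * norm (indicator {t..} u *\<^sub>R ((u-t) powr (\<gamma>+\<delta>-1) *\<^sub>R G u)))"
      using K by (intro integrable_mult_right integrable_norm) (simp add: set_integrable_def)
    have ib: "(\<lambda>u. Beta \<gamma> \<delta> * norm (indicator {t..} u *\<^sub>R ((u-t) powr (\<gamma>+\<delta>-1) *\<^sub>R G u))) = (\<lambda>u. LBINT s. norm (case (u, s) of (u, s) \<Rightarrow> F u s))"
      using t by (auto simp: inner_norm fun_eq_iff indicator_def abs_mult)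
    show "integrable lborel (\<lambda>u. LBINT s. norm (case (u, s) of (u, s) \<Rightarrow> F u s))" using ia unfolding ib .
    show "AE u in lborel. integrable lborel (\<lambda>s. case (u, s) of (u, s) \<Rightarrow> F u s)"
      using inner_int by simp
  qed
  have L: "(\<lambda>s. LBINT u. F u s) = (\<lambda>s. indicator {t..} s *\<^sub>R ((s-t) powr (\<gamma>-1) *\<^sub>R (LINT u:{s..}|lborel. (u-s) powr (\<delta>-1) *\<^sub>R G u)))"
  proof
    fix s
    have e: "(\<lambda>u. F u s) = (\<lambda>u. (indicator {t..} s * (s-t) powr (\<gamma>-1)) *\<^sub>R (indicator {s..} u *\<^sub>R ((u-s) powr (\<delta>-1) *\<^sub>R G u)))"
      by (auto simp: F_def fun_eq_iff indicator_def)
    have "(LBINT u. F u s) = (LBINT u. (indicator {t..} s * (s-t) powr (\<gamma>-1)) *\<^sub>R (indicator {s..} u *\<^sub>R ((u-s) powr (\<delta>-1) *\<^sub>R G u)))"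
      by (simp only: e)
    also have "\<dots> = (indicator {t..} s * (s-t) powr (\<gamma>-1)) *\<^sub>R (LBINT u. indicator {s..} u *\<^sub>R ((u-s) powr (\<delta>-1) *\<^sub>R G u))"
      by (rule integral_scaleR_right)
    finally show "(LBINT u. F u s) = indicator {t..} s *\<^sub>R ((s-t) powr (\<gamma>-1) *\<^sub>R (LINT u:{s..}|lborel. (u-s) powr (\<delta>-1) *\<^sub>R G u))"
      by (simp add: set_lebesgue_integral_def)
  qed
  show "set_integrable lborel {t..} (\<lambda>s. (s-t) powr (\<gamma>-1) *\<^sub>R (LINT u:{s..}|lborel. (u-s) powr (\<delta>-1) *\<^sub>R G u))"
    using lborel_pair.integrable_snd[OF Fint] unfolding L set_integrable_def .
  have "(LINT s:{t..}|lborel. (s-t) powr (\<gamma>-1) *\<^sub>R (LINT u:{s..}|lborel. (u-s) powr (\<delta>-1) *\<^sub>R G u))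
        = (LBINT s. LBINT u. F u s)"
    unfolding L by (simp add: set_lebesgue_integral_def)
  also have "\<dots> = (LBINT u. LBINT s. F u s)"
    by (rule lborel_pair.Fubini_integral[OF Fint])
  also have "\<dots> = (LBINT u. (indicator {t..} u * (Beta \<gamma> \<delta> * (u-t) powr (\<gamma>+\<delta>-1))) *\<^sub>R G u)"
    by (simp add: inner)
  also have "\<dots> = Beta \<gamma> \<delta> *\<^sub>R (LINT u:{t..}|lborel. (u-t) powr (\<gamma>+\<delta>-1) *\<^sub>R G u)"
    by (simp add: set_lebesgue_integral_def mult_ac flip: integral_scaleR_right)
  finally show "(LINT s:{t..}|lborel. (s-t) powr (\<gamma>-1) *\<^sub>R (LINT u:{s..}|lborel. (u-s) powr (\<delta>-1) *\<^sub>R G u))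
          = Beta \<gamma> \<delta> *\<^sub>R (LINT u:{t..}|lborel. (u-t) powr (\<gamma>+\<delta>-1) *\<^sub>R G u)" .
qed

lemma set_integral_tail_ftc:
  fixes F f :: "real \<Rightarrow> complex"
  assumes der: "\<And>x. x \<ge> 0 \<Longrightarrow> (F has_vector_derivative f x) (at x within {0..})"
    and int: "set_integrable lborel {t..} f" and lim: "(F \<longlongrightarrow> 0) at_top" and t: "t \<ge> 0"
  shows "(LINT x:{t..}|lborel. f x) = - F t"
proof -
  have L1: "((\<lambda>b. LINT x:{t..b}|lborel. f x) \<longlongrightarrow> (LINT x:{t..}|lborel. f x)) at_top"
    by (rule tendsto_set_lebesgue_integral_at_top[OF _ int]) auto
  have ev: "\<forall>\<^sub>F b in at_top. (LINT x:{t..b}|lborel. f x) = F b - F t"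
  proof (intro eventually_at_top_linorderI[of t])
    fix b assume b: "b \<ge> t"
    have si: "set_integrable lborel {t..b} f"
      by (rule set_integrable_subset[OF int]) auto
    have "(f has_integral (F b - F t)) {t..b}"
      by (rule fundamental_theorem_of_calculus[OF b])
         (use t in \<open>auto intro: has_vector_derivative_within_subset[OF der]\<close>)
    thus "(LINT x:{t..b}|lborel. f x) = F b - F t"
      using set_borel_integral_eq_integral(2)[OF si] by (simp add: integral_unique)
  qed
  have "((\<lambda>b. F b - F t) \<longlongrightarrow> 0 - F t) at_top"
    by (intro tendsto_diff lim tendsto_const)
  hence "((\<lambda>b. LINT x:{t..b}|lborel. f x) \<longlongrightarrow> 0 - F t) at_top"
    using tendsto_cong[OF ev] by simp
  from tendsto_unique[OF trivial_limit_at_top_linorder L1 this] show ?thesis by simp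
qed

section \<open>Schwartz chains\<close>

definition schwartz_chain :: "(nat \<Rightarrow> real \<Rightarrow> complex) \<Rightarrow> bool" where
  "schwartz_chain D \<longleftrightarrow> (\<forall>k t. t \<ge> 0 \<longrightarrow> (D k has_vector_derivative D (Suc k) t) (at t within {0..})) \<and>
            (\<forall>k m. bounded ((\<lambda>t. (t ^ m) *\<^sub>R D k t) ` {0..}))"

lemma schwartz_plus_iff_chain:
  "schwartz_plus f \<longleftrightarrow> (\<exists>D. schwartz_chain D \<and> (\<forall>t\<ge>0. D 0 t = f t))"
  unfolding schwartz_plus_def schwartz_chain_def by blast

text \<open>Members of a chain only matter on \<open>[0,\<infinity>)\<close>; extending them by zero makes them Borel
  measurable on the whole line.\<close>

definition zero_ext :: "(real \<Rightarrow> 'a::real_vector) \<Rightarrow> real \<Rightarrow> 'a" where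
  "zero_ext g = (\<lambda>u. indicator {0..} u *\<^sub>R g u)"

lemma zero_ext_eq: "t \<ge> 0 \<Longrightarrow> zero_ext g t = g t"
  by (simp add: zero_ext_def)

lemma one_plus_power_le:
  fixes t :: real assumes "t \<ge> 0"
  shows "(1 + t) ^ m \<le> 2 ^ m * (1 + t ^ m)"
proof (cases "t \<le> 1")
  case True
  have "(1+t)^m \<le> 2^m" using assms True by (intro power_mono) auto
  also have "\<dots> \<le> 2^m * (1 + t^m)" using assms by simp
  finally show ?thesis .
next
  case False
  have "(1+t)^m \<le> (2*t)^m" using assms False by (intro power_mono) auto
  also have "\<dots> = 2^m * t^m" by (simp add: power_mult_distrib)
  also have "\<dots> \<le> 2^m * (1 + t^m)" by simp
  finally show ?thesis .
qed

lemma schwartz_chain_decay: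
  assumes "schwartz_chain D"
  shows "\<exists>M. \<forall>y\<ge>0. norm (D k y) \<le> M / (1+y)^m"
proof -
  from assms have b0: "bounded ((\<lambda>t. (t ^ 0) *\<^sub>R D k t) ` {0..})"
    and bm: "bounded ((\<lambda>t. (t ^ m) *\<^sub>R D k t) ` {0..})" unfolding schwartz_chain_def by blast+
  obtain B0 where B0: "\<forall>t\<in>{0..}. norm ((t ^ 0) *\<^sub>R D k t) \<le> B0"
    using b0 unfolding bounded_iff by auto
  obtain Bm where Bm: "\<forall>t\<in>{0..}. norm ((t ^ m) *\<^sub>R D k t) \<le> Bm"
    using bm unfolding bounded_iff by auto
  show ?thesis
  proof (intro exI allI impI)
    fix y :: real assume y: "y \<ge> 0"
    have a: "norm (D k y) \<le> B0" using B0 y by auto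
    have b: "y^m * norm (D k y) \<le> Bm" using Bm y by auto
    have "(1+y)^m * norm (D k y) \<le> 2^m * (1 + y^m) * norm (D k y)"
      using one_plus_power_le[OF y, of m] by (intro mult_right_mono) auto
    also have "\<dots> = 2^m * (norm (D k y) + y^m * norm (D k y))" by (simp add: algebra_simps)
    also have "\<dots> \<le> 2^m * (B0 + Bm)" using a b by (intro mult_left_mono) auto
    finally have "(1+y)^m * norm (D k y) \<le> 2^m * (B0 + Bm)" .
    moreover have "(1+y)^m > 0" using y by simp
    ultimately show "norm (D k y) \<le> 2^m * (B0 + Bm) / (1+y)^m"
      by (simp add: field_simps)
  qed
qed

lemma schwartz_chain_continuous: "schwartz_chain D \<Longrightarrow> continuous_on {0..} (D k)"
  unfolding schwartz_chain_def continuous_on_eq_continuous_within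
  by (auto intro: has_vector_derivative_continuous)

lemma chain_zero_ext_measurable[measurable]: "schwartz_chain D \<Longrightarrow> zero_ext (D k) \<in> borel_measurable borel"
  unfolding zero_ext_def by (rule borel_measurable_continuous_on_indicator) (auto intro: schwartz_chain_continuous)

lemma chain_zero_ext_decay:
  assumes "schwartz_chain D"
  shows "\<exists>M. \<forall>y\<ge>0. norm (zero_ext (D k) y) \<le> M / (1+y)^m"
  using schwartz_chain_decay[OF assms, of k m] by (simp add: zero_ext_eq)

lemma chain_zero_ext_derivative:
  assumes "schwartz_chain D" "t \<ge> 0"
  shows "(zero_ext (D k) has_vector_derivative zero_ext (D (Suc k)) t) (at t within {0..})"
proof -
  have "(D k has_vector_derivative D (Suc k) t) (at t within {0..})"
    using assms unfolding schwartz_chain_def by blast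
  hence "(zero_ext (D k) has_vector_derivative D (Suc k) t) (at t within {0..})"
    by (rule has_vector_derivative_transform[rotated 2]) (use assms in \<open>auto simp: zero_ext_eq\<close>)
  thus ?thesis using assms by (simp add: zero_ext_eq)
qed

lemma chain_zero_ext_tendsto_0:
  assumes "schwartz_chain D"
  shows "(zero_ext (D k) \<longlongrightarrow> 0) at_top"
proof -
  obtain M where M: "\<forall>y\<ge>0. norm (zero_ext (D k) y) \<le> M / (1+y)^1"
    using chain_zero_ext_decay[OF assms] by blast
  have "((\<lambda>y::real. M / (1+y)) \<longlongrightarrow> 0) at_top" by real_asymp
  thus ?thesis
    by (rule Lim_null_comparison[rotated]) (use M in \<open>auto intro!: eventually_at_top_linorderI[of 0]\<close>)
qed

lemma schwartz_chain_diff: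
  assumes "schwartz_chain D1" "schwartz_chain D2"
  shows "schwartz_chain (\<lambda>k t. D1 k t - D2 k t)"
  unfolding schwartz_chain_def
proof (intro conjI allI impI)
  fix k and t :: real assume "t \<ge> 0"
  thus "((\<lambda>t. D1 k t - D2 k t) has_vector_derivative D1 (Suc k) t - D2 (Suc k) t) (at t within {0..})"
    using assms unfolding schwartz_chain_def by (intro has_vector_derivative_diff) auto
next
  fix k m
  obtain B1 where B1: "\<forall>x\<in>(\<lambda>t. (t ^ m) *\<^sub>R D1 k t) ` {0..}. norm x \<le> B1"
    using assms(1) unfolding schwartz_chain_def bounded_iff by blast
  obtain B2 where B2: "\<forall>x\<in>(\<lambda>t. (t ^ m) *\<^sub>R D2 k t) ` {0..}. norm x \<le> B2"
    using assms(2) unfolding schwartz_chain_def bounded_iff by blast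
  show "bounded ((\<lambda>t. t ^ m *\<^sub>R (D1 k t - D2 k t)) ` {0..})"
    unfolding bounded_iff
  proof (intro exI ballI)
    fix x assume "x \<in> (\<lambda>t. t ^ m *\<^sub>R (D1 k t - D2 k t)) ` {0..}"
    then obtain t where t: "t \<in> {0..}" and x: "x = t ^ m *\<^sub>R (D1 k t - D2 k t)" by auto
    have "norm x = norm (t ^ m *\<^sub>R D1 k t - t ^ m *\<^sub>R D2 k t)" by (simp add: x scaleR_diff_right)
    also have "\<dots> \<le> norm (t ^ m *\<^sub>R D1 k t) + norm (t ^ m *\<^sub>R D2 k t)" by (rule norm_triangle_ineq4)
    also have "\<dots> \<le> B1 + B2" using B1 B2 t by (intro add_mono) auto
    finally show "norm x \<le> B1 + B2" .
  qed
qed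

lemma zero_ext_diff: "zero_ext (\<lambda>u. f u - g u) = (\<lambda>u. zero_ext f u - zero_ext g u)"
  by (auto simp: zero_ext_def fun_eq_iff scaleR_diff_right)

context
  fixes D :: "nat \<Rightarrow> real \<Rightarrow> complex"
  assumes chain: "schwartz_chain D"
begin

lemma chain_zero_ext_borel[measurable]: "zero_ext (D k) \<in> borel_measurable borel"
  by (rule chain_zero_ext_measurable[OF chain])

lemma chain_powr_kernel_semigroup:
  assumes "\<gamma> > 0" "\<delta> > 0" "t \<ge> 0"
  shows "(LINT s:{t..}|lborel. (s-t) powr (\<gamma>-1) *\<^sub>R (LINT u:{s..}|lborel. (u-s) powr (\<delta>-1) *\<^sub>R zero_ext (D k) u))
          = Beta \<gamma> \<delta> *\<^sub>R (LINT u:{t..}|lborel. (u-t) powr (\<gamma>+\<delta>-1) *\<^sub>R zero_ext (D k) u)"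
proof -
  define N where "N = nat \<lceil>\<gamma>+\<delta>\<rceil>"
  have N: "\<gamma> + \<delta> - 1 \<le> real N" unfolding N_def by linarith
  obtain M where M: "\<forall>y\<ge>0. norm (zero_ext (D k) y) \<le> M / (1+y)^(N+2)"
    using chain_zero_ext_decay[OF chain] by blast
  show ?thesis by (rule powr_kernel_semigroup(2)[OF assms(1,2) chain_zero_ext_borel M N _ assms(3)]) simp
qed

lemma chain_tail_ftc:
  assumes "t \<ge> 0"
  shows "(LINT u:{t..}|lborel. zero_ext (D (Suc j)) u) = - zero_ext (D j) t"
proof (rule set_integral_tail_ftc[OF _ _ chain_zero_ext_tendsto_0[OF chain] assms])
  show "(zero_ext (D j) has_vector_derivative zero_ext (D (Suc j)) x) (at x within {0..})" if "x \<ge> 0" for x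
    by (rule chain_zero_ext_derivative[OF chain that])
  obtain M where M: "\<forall>y\<ge>0. norm (zero_ext (D (Suc j)) y) \<le> M / (1+y)^2"
    using chain_zero_ext_decay[OF chain] by blast
  show "set_integrable lborel {t..} (zero_ext (D (Suc j)))"
    by (rule set_integrable_decay[OF chain_zero_ext_borel M assms])
qed

lemma chain_taylor_tail:
  "t \<ge> 0 \<Longrightarrow> (LINT u:{t..}|lborel. (u-t) powr (real k) *\<^sub>R zero_ext (D (j+k+1)) u) = ((-1)^(k+1) * fact k) *\<^sub>R zero_ext (D j) t"
proof (induction k arbitrary: t)
  case 0
  show ?case using set_integral_powr_0[OF chain_zero_ext_borel, of t "Suc j"] chain_tail_ftc[OF 0, of j] by simp
next
  case (Suc k)
  \<comment> \<open>Each step trades one power of \<open>u - t\<close> for one derivative, via the semigroup law with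
    \<open>\<delta> = 1\<close> and the fundamental theorem of calculus.\<close>
  have "(LINT u:{t..}|lborel. (u-t) powr (real (Suc k)) *\<^sub>R zero_ext (D (j+Suc k+1)) u)
      = (real k + 1) *\<^sub>R (Beta (real k + 1) 1 *\<^sub>R (LINT u:{t..}|lborel. (u-t) powr (real k + 1 + 1 - 1) *\<^sub>R zero_ext (D (j+k+2)) u))"
  proof -
    have b: "(1 + real k) * Beta (1 + real k) 1 = 1" using Beta_1_right[of "1 + real k"] by simp
    show ?thesis by (simp add: b add_ac)
  qed
  also have "(Beta (real k + 1) 1 *\<^sub>R (LINT u:{t..}|lborel. (u-t) powr (real k + 1 + 1 - 1) *\<^sub>R zero_ext (D (j+k+2)) u))
      = (LINT s:{t..}|lborel. (s-t) powr (real k + 1 - 1) *\<^sub>R (LINT u:{s..}|lborel. (u-s) powr (1-1) *\<^sub>R zero_ext (D (j+k+2)) u))"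
    by (rule chain_powr_kernel_semigroup[symmetric]) (use Suc.prems in auto)
  also have "\<dots> = (LINT s:{t..}|lborel. (s-t) powr (real k) *\<^sub>R (- zero_ext (D (j+k+1)) s))"
  proof -
    have "(LINT u:{s..}|lborel. (u-s) powr (1-1) *\<^sub>R zero_ext (D (j+k+2)) u) = - zero_ext (D (j+k+1)) s" if "s \<ge> t" for s
      using set_integral_powr_0[OF chain_zero_ext_borel, of s "j+k+2"] chain_tail_ftc[of s "j+k+1"] that Suc.prems by (simp add: add_ac)
    thus ?thesis unfolding set_lebesgue_integral_def
      by (intro Bochner_Integration.integral_cong) (auto simp: indicator_def)
  qed
  also have "\<dots> = - (LINT s:{t..}|lborel. (s-t) powr (real k) *\<^sub>R zero_ext (D (j+k+1)) s)"
    by (simp add: set_lebesgue_integral_def flip: integral_minus)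
  also have "\<dots> = - (((-1)^(k+1) * fact k) *\<^sub>R zero_ext (D j) t)"
    using Suc.IH[OF Suc.prems] by simp
  finally show ?case by (simp add: algebra_simps)
qed

end

section \<open>The Weyl kernel\<close>

lemma has_vector_derivative_iff_quotient:
  fixes f :: "real \<Rightarrow> 'a::real_normed_vector"
  shows "(f has_vector_derivative f') (at y) \<longleftrightarrow> ((\<lambda>h. (f (y + h) - f y) /\<^sub>R h) \<longlongrightarrow> f') (at 0)"
proof -
  have quotient: "norm ((f z - f y) /\<^sub>R (z - y) - f') = norm (f z - f y - (z - y) *\<^sub>R f') / norm (z - y)"
    if "z \<noteq> y" for z
  proof -
    have "(f z - f y) /\<^sub>R (z - y) - f' = (1 / (z - y)) *\<^sub>R (f z - f y - (z - y) *\<^sub>R f')"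
      using that by (simp add: scaleR_diff_right divide_inverse)
    then show ?thesis by (simp add: divide_simps)
  qed
  have "(f has_vector_derivative f') (at y) \<longleftrightarrow>
      ((\<lambda>z. norm (f z - f y - (z - y) *\<^sub>R f') / norm (z - y)) \<longlongrightarrow> 0) (at y)"
    unfolding has_vector_derivative_def has_derivative_iff_norm by (auto intro: bounded_linear_scaleR_left)
  also have "\<dots> \<longleftrightarrow> ((\<lambda>z. norm ((f z - f y) /\<^sub>R (z - y) - f')) \<longlongrightarrow> 0) (at y)"
    by (intro tendsto_cong) (auto simp: eventually_at_filter quotient)
  also have "\<dots> \<longleftrightarrow> ((\<lambda>z. (f z - f y) /\<^sub>R (z - y)) \<longlongrightarrow> f') (at y)"
    by (simp add: tendsto_norm_zero_iff LIM_zero_iff)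
  also have "\<dots> \<longleftrightarrow> ((\<lambda>h. (f (y + h) - f y) /\<^sub>R h) \<longlongrightarrow> f') (at 0)"
    by (subst LIM_offset_zero_iff) auto
  finally show ?thesis .
qed

lemma powr_decay_le_kernel_majorant:
  fixes u \<beta> C :: real
  assumes "u \<ge> 0" "0 < \<beta>" "\<beta> \<le> 1" "C \<ge> 0"
  shows "u powr (\<beta>-1) * (C / (1+u)^2) \<le> C * (indicator {0..0+1} u * u powr (\<beta>-1) + indicator {0..} u * (1/(1+u)^2))"
proof (cases "u \<le> 1")
  case True
  have "1 \<le> (1+u)^2" using assms by (intro one_le_power) auto
  hence "C / (1+u)^2 \<le> C / 1" using assms by (intro divide_left_mono) auto
  hence "C / (1+u)^2 \<le> C" by simp
  hence "u powr (\<beta>-1) * (C / (1+u)^2) \<le> u powr (\<beta>-1) * C" by (intro mult_left_mono) auto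
  also have "\<dots> \<le> C * (indicator {0..0+1} u * u powr (\<beta>-1) + indicator {0..} u * (1/(1+u)^2))"
    using True assms by (simp add: indicator_def algebra_simps)
  finally show ?thesis .
next
  case False
  have "u powr (\<beta>-1) \<le> 1" using False assms
    by (metis powr_nonneg_iff powr_zero_eq_one powr_mono diff_le_0_iff_le less_eq_real_def not_le)
  hence "u powr (\<beta>-1) * (C / (1+u)^2) \<le> 1 * (C / (1+u)^2)" using assms by (intro mult_right_mono) auto
  also have "\<dots> \<le> C * (indicator {0..0+1} u * u powr (\<beta>-1) + indicator {0..} u * (1/(1+u)^2))"
    using False assms by (simp add: indicator_def)
  finally show ?thesis .
qed

lemma integrable_kernel_majorant:
  fixes \<beta> C :: real
  assumes "0 < \<beta>"
  shows "integrable lborel (\<lambda>u. C * (indicator {0..0+1} u * u powr (\<beta>-1) + indicator {0..} u * (1/(1+u)^2)))"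
proof -
  have i1: "integrable lborel (\<lambda>s. indicator {0..0+1} s *\<^sub>R (s-0) powr (\<beta>-1))"
    using set_integrable_powr_unit_interval[OF assms, of 0] by (simp add: set_integrable_def)
  have i2: "integrable lborel (\<lambda>s. indicator {0..} s *\<^sub>R (1/(1+s)^2::real))"
    using set_integrable_inverse_square by (simp add: set_integrable_def)
  show ?thesis using Bochner_Integration.integrable_add[OF i1 i2]
    by (intro integrable_mult_right) simp
qed

definition weyl_kernel :: "real \<Rightarrow> (real \<Rightarrow> complex) \<Rightarrow> real \<Rightarrow> complex" where
  "weyl_kernel \<beta> g x = (LBINT u. indicator {0..} u *\<^sub>R (u powr (\<beta>-1) *\<^sub>R g (x+u)))"

lemma set_integral_powr_kernel_eq_weyl_kernel: "(LINT s:{x..}|lborel. (s-x) powr (\<beta>-1) *\<^sub>R g s) = weyl_kernel \<beta> g x"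
proof -
  have "(LINT s:{x..}|lborel. (s-x) powr (\<beta>-1) *\<^sub>R g s) = (LBINT s. indicator {x..} s *\<^sub>R ((s-x) powr (\<beta>-1) *\<^sub>R g s))"
    by (simp add: set_lebesgue_integral_def)
  also have "\<dots> = \<bar>1\<bar> *\<^sub>R (LBINT u. indicator {x..} (x + 1*u) *\<^sub>R (((x + 1*u)-x) powr (\<beta>-1) *\<^sub>R g (x + 1*u)))"
    by (rule lborel_integral_real_affine[where c=1 and t=x]) simp
  also have "(\<lambda>u. indicator {x..} (x + 1*u) *\<^sub>R (((x + 1*u)-x) powr (\<beta>-1) *\<^sub>R g (x + 1*u))) = (\<lambda>u. indicator {0..} u *\<^sub>R (u powr (\<beta>-1) *\<^sub>R g (x+u)))"
    by (auto simp: indicator_def fun_eq_iff)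
  also have "\<bar>1::real\<bar> *\<^sub>R (LBINT u. indicator {0..} u *\<^sub>R (u powr (\<beta>-1) *\<^sub>R g (x+u))) = weyl_kernel \<beta> g x"
    by (simp add: weyl_kernel_def)
  finally show ?thesis .
qed

lemma integrable_weyl_kernel_integrand:
  fixes g :: "real \<Rightarrow> complex"
  assumes b: "0 < \<beta>" "\<beta> \<le> 1" and g[measurable]: "g \<in> borel_measurable borel"
    and dec: "\<forall>y\<ge>0. norm (g y) \<le> M / (1+y)^2" and x: "x \<ge> 0"
  shows "integrable lborel (\<lambda>u. indicator {0..} u *\<^sub>R (u powr (\<beta>-1) *\<^sub>R g (x+u)))"
proof (rule Bochner_Integration.integrable_bound[OF integrable_kernel_majorant[OF b(1), of M] _ AE_I2])
  show "(\<lambda>u. indicator {0..} u *\<^sub>R (u powr (\<beta>-1) *\<^sub>R g (x+u))) \<in> borel_measurable lborel" by measurable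
next
  fix u :: real
  have M0: "M \<ge> 0" using dec by (rule decay_bound_nonneg)
  show "norm (indicator {0..} u *\<^sub>R (u powr (\<beta>-1) *\<^sub>R g (x+u))) \<le>
        norm (M * (indicator {0..0+1} u * u powr (\<beta>-1) + indicator {0..} u * (1/(1+u)^2)))"
  proof (cases "u \<ge> 0")
    case True
    have "norm (g (x+u)) \<le> M / (1+(x+u))^2" using dec True x by auto
    also have "\<dots> \<le> M / (1+u)^2" using True x M0 by (intro divide_left_mono power_mono mult_pos_pos) auto
    finally have gn: "norm (g (x+u)) \<le> M / (1+u)^2" .
    have "norm (indicator {0..} u *\<^sub>R (u powr (\<beta>-1) *\<^sub>R g (x+u))) = u powr (\<beta>-1) * norm (g (x+u))"
      using True by simp
    also have "\<dots> \<le> u powr (\<beta>-1) * (M / (1+u)^2)" using gn by (intro mult_left_mono) auto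
    also have "\<dots> \<le> M * (indicator {0..0+1} u * u powr (\<beta>-1) + indicator {0..} u * (1/(1+u)^2))"
      by (rule powr_decay_le_kernel_majorant[OF True b M0])
    also have "\<dots> \<le> norm (M * (indicator {0..0+1} u * u powr (\<beta>-1) + indicator {0..} u * (1/(1+u)^2)))"
      by simp
    finally show ?thesis .
  qed simp
qed

lemma weyl_kernel_measurable[measurable]:
  assumes [measurable]: "g \<in> borel_measurable borel"
  shows "weyl_kernel \<beta> g \<in> borel_measurable borel"
  unfolding weyl_kernel_def by measurable

lemma integrable_powr_div_square:
  fixes \<beta> :: real
  assumes "0 < \<beta>" "\<beta> \<le> 1"
  shows "integrable lborel (\<lambda>u. indicator {0..} u * (u powr (\<beta>-1) / (1+u)^2))"
proof (rule Bochner_Integration.integrable_bound[OF integrable_kernel_majorant[OF assms(1), of 1] _ AE_I2])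
  show "(\<lambda>u. indicator {0..} u * (u powr (\<beta>-1) / (1+u)^2)) \<in> borel_measurable lborel" by measurable
next
  fix u :: real
  show "norm (indicator {0..} u * (u powr (\<beta>-1) / (1+u)^2)) \<le> norm (1 * (indicator {0..0+1} u * u powr (\<beta>-1) + indicator {0..} u * (1/(1+u)^2)))"
  proof (cases "u \<ge> 0")
    case True
    have "u powr (\<beta>-1) * (1 / (1+u)^2) \<le> 1 * (indicator {0..0+1} u * u powr (\<beta>-1) + indicator {0..} u * (1/(1+u)^2))"
      by (rule powr_decay_le_kernel_majorant[OF True assms]) simp
    moreover have "0 \<le> indicator {0..0+1} u * u powr (\<beta>-1) + indicator {0..} u * (1/(1+u)^2)"
      using True by (auto simp: indicator_def)
    ultimately show ?thesis using True by simp
  qed simp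
qed

lemma decay_bound_mono:
  assumes "\<forall>y\<ge>0. norm (g y) \<le> M / (1+y)^m" "n \<le> m"
  shows "\<forall>y\<ge>0. norm (g y) \<le> M / (1+y)^n"
proof (intro allI impI)
  fix y :: real assume y: "y \<ge> 0"
  have "norm (g y) \<le> M / (1+y)^m" using assms y by auto
  also have "\<dots> \<le> M / (1+y)^n"
    using y assms decay_bound_nonneg[OF assms(1)] by (intro divide_left_mono power_increasing) auto
  finally show "norm (g y) \<le> M / (1+y)^n" .
qed

lemma decay_bound_shift:
  assumes dec: "\<forall>y\<ge>0. norm (g y) \<le> M / (1+y)^(k+2)" and s: "s \<ge> 0" and u: "u \<ge> 0"
  shows "norm (g (s+u)) \<le> M / ((1+s)^k * (1+u)^2)"
proof -
  have "(1+s)^k * (1+u)^2 \<le> (1+(s+u))^k * (1+(s+u))^2"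
    using s u by (intro mult_mono power_mono) auto
  then have "(1+s)^k * (1+u)^2 \<le> (1+(s+u))^(k+2)"
    by (simp only: power_add)
  then have "M / (1+(s+u))^(k+2) \<le> M / ((1+s)^k * (1+u)^2)"
    using s u decay_bound_nonneg[OF dec] by (intro divide_left_mono) auto
  with dec s u show ?thesis
    by (meson add_nonneg_nonneg order_trans)
qed

lemma weyl_kernel_decay:
  fixes g :: "real \<Rightarrow> complex"
  assumes b: "0 < \<beta>" "\<beta> \<le> 1" and gm[measurable]: "g \<in> borel_measurable borel"
    and dec: "\<forall>y\<ge>0. norm (g y) \<le> M / (1+y)^(k+2)"
  shows "\<exists>C. \<forall>s\<ge>0. norm (weyl_kernel \<beta> g s) \<le> C / (1+s)^k"
proof (intro exI allI impI)
  fix s :: real assume s: "s \<ge> 0"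
  define c where "c = (LBINT u. indicator {0..} u * (u powr (\<beta>-1) / (1+u)^2))"
  have i1: "integrable lborel (\<lambda>u. norm (indicator {0..} u *\<^sub>R (u powr (\<beta>-1) *\<^sub>R g (s+u))))"
    using decay_bound_mono[OF dec, of 2]
    by (intro integrable_norm integrable_weyl_kernel_integrand[OF b gm _ s]) auto
  have i2: "integrable lborel (\<lambda>u. (M / (1+s)^k) * (indicator {0..} u * (u powr (\<beta>-1) / (1+u)^2)))"
    by (intro integrable_mult_right integrable_powr_div_square[OF b])
  have "norm (weyl_kernel \<beta> g s) \<le> (LBINT u. norm (indicator {0..} u *\<^sub>R (u powr (\<beta>-1) *\<^sub>R g (s+u))))"
    unfolding weyl_kernel_def by (rule integral_norm_bound)
  also have "\<dots> \<le> (LBINT u. (M / (1+s)^k) * (indicator {0..} u * (u powr (\<beta>-1) / (1+u)^2)))"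
  proof (rule integral_mono[OF i1 i2])
    fix u :: real
    show "norm (indicator {0..} u *\<^sub>R (u powr (\<beta>-1) *\<^sub>R g (s+u))) \<le> (M / (1+s)^k) * (indicator {0..} u * (u powr (\<beta>-1) / (1+u)^2))"
    proof (cases "u \<ge> 0")
      case True
      have "norm (indicator {0..} u *\<^sub>R (u powr (\<beta>-1) *\<^sub>R g (s+u))) = u powr (\<beta>-1) * norm (g (s+u))"
        using True by simp
      also have "\<dots> \<le> u powr (\<beta>-1) * (M / ((1+s)^k * (1+u)^2))"
        using decay_bound_shift[OF dec s True] by (intro mult_left_mono) auto
      also have "\<dots> = (M / (1+s)^k) * (indicator {0..} u * (u powr (\<beta>-1) / (1+u)^2))"
        using True by (simp add: field_simps)
      finally show ?thesis .
    qed simp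
  qed
  also have "\<dots> = (M / (1+s)^k) * c"
    unfolding c_def by (rule integral_mult_right_zero)
  also have "\<dots> = M * c / (1+s)^k"
    by simp
  finally show "norm (weyl_kernel \<beta> g s) \<le> M * c / (1+s)^k" .
qed

lemma difference_quotient_bound:
  fixes g g1 :: "real \<Rightarrow> complex"
  assumes dg1: "\<forall>y\<ge>0. norm (g1 y) \<le> M1 / (1+y)^2"
    and der: "\<forall>y\<ge>0. (g has_vector_derivative g1 y) (at y within {0..})"
    and t: "t > 0" and u: "u \<ge> 0" and h: "\<bar>h\<bar> < t/2" "h \<noteq> 0"
  shows "norm ((g (t + h + u) - g (t + u)) /\<^sub>R h) \<le> 3 * M1 / (1+u)^2"
proof -
  define S where "S = {u + t/2..}"
  define B where "B = 2 * M1 / (1+u)^2"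
  have M1: "M1 \<ge> 0" using dg1 by (rule decay_bound_nonneg)
  have Sg: "\<And>x. x \<in> S \<Longrightarrow> norm (g1 x) \<le> M1 / (1+u)^2"
  proof -
    fix x assume "x \<in> S"
    hence x: "x \<ge> u" "x \<ge> 0" using t u by (auto simp: S_def)
    have "norm (g1 x) \<le> M1 / (1+x)^2" using dg1 x by auto
    also have "\<dots> \<le> M1 / (1+u)^2" using x u M1 by (intro divide_left_mono power_mono mult_pos_pos) auto
    finally show "norm (g1 x) \<le> M1 / (1+u)^2" .
  qed
  have x0: "t + u \<in> S" using t by (auto simp: S_def)
  have "norm (g (t + h + u) - g (t + u) - ((t + h + u) - (t + u)) *\<^sub>R g1 (t + u)) \<le> norm ((t + h + u) - (t + u)) * B"
  proof (rule vector_differentiable_bound_linearization[where S=S])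
    show "(g has_vector_derivative g1 x) (at x within S)" if "x \<in> S" for x
    proof -
      have "x \<ge> 0" using that t u by (auto simp: S_def)
      hence "(g has_vector_derivative g1 x) (at x within {0..})" using der by auto
      thus ?thesis by (rule has_vector_derivative_within_subset) (use t u in \<open>auto simp: S_def\<close>)
    qed
    show "closed_segment (t + u) (t + h + u) \<subseteq> S"
      using h t by (auto simp: S_def closed_segment_eq_real_ivl split: if_splits)
    show "norm (g1 x - g1 (t + u)) \<le> B" if "x \<in> S" for x
    proof -
      have "norm (g1 x - g1 (t + u)) \<le> norm (g1 x) + norm (g1 (t + u))" by (rule norm_triangle_ineq4)
      also have "\<dots> \<le> M1 / (1+u)^2 + M1 / (1+u)^2" using Sg[OF that] Sg[OF x0] by linarith
      finally show ?thesis by (simp add: B_def)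
    qed
    show "t + u \<in> S" by (rule x0)
  qed
  hence lin: "norm (g (t + h + u) - g (t + u) - h *\<^sub>R g1 (t + u)) \<le> \<bar>h\<bar> * B" by simp
  have "(g (t + h + u) - g (t + u)) /\<^sub>R h = g1 (t + u) + (g (t + h + u) - g (t + u) - h *\<^sub>R g1 (t + u)) /\<^sub>R h"
    using h by (simp add: algebra_simps)
  hence "norm ((g (t + h + u) - g (t + u)) /\<^sub>R h) \<le> norm (g1 (t + u)) + norm (g (t + h + u) - g (t + u) - h *\<^sub>R g1 (t + u)) / \<bar>h\<bar>"
    by (metis norm_scaleR norm_triangle_ineq abs_inverse divide_inverse_commute mult.commute)
  also have "\<dots> \<le> M1 / (1+u)^2 + B"
  proof -
    have "norm (g (t + h + u) - g (t + u) - h *\<^sub>R g1 (t + u)) / \<bar>h\<bar> \<le> B"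
      using lin h by (simp add: divide_le_eq mult.commute)
    thus ?thesis using Sg[OF x0] by linarith
  qed
  also have "\<dots> = 3 * M1 / (1+u)^2" by (simp add: B_def field_simps)
  finally show ?thesis .
qed

lemma weyl_kernel_difference_quotient:
  fixes g :: "real \<Rightarrow> complex"
  assumes b: "0 < \<beta>" "\<beta> \<le> 1" and gm[measurable]: "g \<in> borel_measurable borel"
    and dg: "\<forall>y\<ge>0. norm (g y) \<le> M / (1+y)^2" and x: "x \<ge> 0" "x + h \<ge> 0"
  shows "(weyl_kernel \<beta> g (x + h) - weyl_kernel \<beta> g x) /\<^sub>R h
    = (LBINT u. indicator {0..} u *\<^sub>R (u powr (\<beta>-1) *\<^sub>R ((g (x + h + u) - g (x + u)) /\<^sub>R h)))"
proof -
  have i1: "integrable lborel (\<lambda>u. indicator {0..} u *\<^sub>R (u powr (\<beta>-1) *\<^sub>R g ((x + h) + u)))"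
    by (rule integrable_weyl_kernel_integrand[OF b gm dg x(2)])
  have i2: "integrable lborel (\<lambda>u. indicator {0..} u *\<^sub>R (u powr (\<beta>-1) *\<^sub>R g (x + u)))"
    by (rule integrable_weyl_kernel_integrand[OF b gm dg x(1)])
  have "(weyl_kernel \<beta> g (x + h) - weyl_kernel \<beta> g x) /\<^sub>R h
     = (LBINT u. indicator {0..} u *\<^sub>R (u powr (\<beta>-1) *\<^sub>R g ((x + h) + u)) - indicator {0..} u *\<^sub>R (u powr (\<beta>-1) *\<^sub>R g (x + u))) /\<^sub>R h"
    unfolding weyl_kernel_def using i1 i2 by (simp add: Bochner_Integration.integral_diff)
  also have "\<dots> = (LBINT u. (indicator {0..} u *\<^sub>R (u powr (\<beta>-1) *\<^sub>R g ((x + h) + u)) - indicator {0..} u *\<^sub>R (u powr (\<beta>-1) *\<^sub>R g (x + u))) /\<^sub>R h)"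
    by (simp add: integral_scaleR_right)
  also have "\<dots> = (LBINT u. indicator {0..} u *\<^sub>R (u powr (\<beta>-1) *\<^sub>R ((g (x + h + u) - g (x + u)) /\<^sub>R h)))"
    by (intro Bochner_Integration.integral_cong refl) (simp add: algebra_simps)
  finally show ?thesis .
qed

lemma weyl_kernel_quotient_sequence:
  fixes g g1 :: "real \<Rightarrow> complex" and Y :: "nat \<Rightarrow> real"
  assumes b: "0 < \<beta>" "\<beta> \<le> 1" and gm[measurable]: "g \<in> borel_measurable borel"
    and g1m[measurable]: "g1 \<in> borel_measurable borel"
    and dg: "\<forall>y\<ge>0. norm (g y) \<le> M0 / (1+y)^2" and dg1: "\<forall>y\<ge>0. norm (g1 y) \<le> M1 / (1+y)^2"
    and der: "\<forall>y\<ge>0. (g has_vector_derivative g1 y) (at y within {0..})"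
    and t: "t > 0" and Y: "\<And>i. \<bar>Y i\<bar> < t/2" "\<And>i. Y i \<noteq> 0" "Y \<longlonglongrightarrow> 0"
  shows "(\<lambda>i. (weyl_kernel \<beta> g (t + Y i) - weyl_kernel \<beta> g t) /\<^sub>R Y i) \<longlonglongrightarrow> weyl_kernel \<beta> g1 t"
proof -
  have M1: "M1 \<ge> 0" using dg1 by (rule decay_bound_nonneg)
  define q where "q i u = indicator {0..} u *\<^sub>R (u powr (\<beta>-1) *\<^sub>R ((g (t + Y i + u) - g (t + u)) /\<^sub>R Y i))" for i u
  define w where "w u = (3*M1) * (indicator {0..0+1} u * u powr (\<beta>-1) + indicator {0..} u * (1/(1+u)^2))" for u
  have "(\<lambda>i. integral\<^sup>L lborel (q i)) \<longlonglongrightarrow> (LBINT u. indicator {0..} u *\<^sub>R (u powr (\<beta>-1) *\<^sub>R g1 (t + u)))"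
  proof (rule integral_dominated_convergence[where w=w])
    show "q i \<in> borel_measurable lborel" for i unfolding q_def by measurable
    show "integrable lborel w" unfolding w_def by (rule integrable_kernel_majorant[OF b(1)])
    show "AE u in lborel. (\<lambda>i. q i u) \<longlonglongrightarrow> indicator {0..} u *\<^sub>R (u powr (\<beta>-1) *\<^sub>R g1 (t + u))"
    proof (rule AE_I2)
      fix u :: real
      show "(\<lambda>i. q i u) \<longlonglongrightarrow> indicator {0..} u *\<^sub>R (u powr (\<beta>-1) *\<^sub>R g1 (t + u))"
      proof (cases "u \<ge> 0")
        case True
        have "(g has_vector_derivative g1 (t+u)) (at (t+u) within {0..})"
          using der True t by auto
        moreover have "at (t+u) within {0..} = at (t+u)"
          by (rule at_within_interior) (use True t in auto)
        ultimately have "(g has_vector_derivative g1 (t+u)) (at (t+u))"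
          by simp
        then have "((\<lambda>h. (g (t + u + h) - g (t + u)) /\<^sub>R h) \<longlongrightarrow> g1 (t+u)) (at 0)"
          by (simp add: has_vector_derivative_iff_quotient)
        from filterlim_compose[OF this filterlim_atI[OF Y(3)]] Y(2)
        have "(\<lambda>i. (g (t + Y i + u) - g (t + u)) /\<^sub>R Y i) \<longlonglongrightarrow> g1 (t+u)"
          by (simp add: add_ac)
        then show ?thesis unfolding q_def by (intro tendsto_scaleR tendsto_const)
      qed (simp add: q_def)
    qed
    show "AE u in lborel. norm (q i u) \<le> w u" for i
    proof (rule AE_I2)
      fix u :: real
      show "norm (q i u) \<le> w u"
      proof (cases "u \<ge> 0")
        case True
        have "norm (q i u) = u powr (\<beta>-1) * norm ((g (t + Y i + u) - g (t + u)) /\<^sub>R Y i)"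
          using True by (simp add: q_def abs_mult)
        also have "\<dots> \<le> u powr (\<beta>-1) * (3 * M1 / (1+u)^2)"
          by (intro mult_left_mono difference_quotient_bound[OF dg1 der t True Y(1,2)]) auto
        also have "\<dots> \<le> w u" unfolding w_def
          using powr_decay_le_kernel_majorant[OF True b, of "3*M1"] M1 by simp
        finally show ?thesis .
      qed (use M1 in \<open>simp add: q_def w_def indicator_def\<close>)
    qed
  qed simp
  moreover have "(weyl_kernel \<beta> g (t + Y i) - weyl_kernel \<beta> g t) /\<^sub>R Y i = integral\<^sup>L lborel (q i)" for i
    unfolding q_def using Y(1)[of i] t by (intro weyl_kernel_difference_quotient[OF b gm dg]) auto
  ultimately show ?thesis
    by (simp add: weyl_kernel_def)
qed

lemma weyl_kernel_has_vector_derivative: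
  fixes g g1 :: "real \<Rightarrow> complex" and \<beta> :: real
  assumes b: "0 < \<beta>" "\<beta> \<le> 1" and gm[measurable]: "g \<in> borel_measurable borel"
    and g1m[measurable]: "g1 \<in> borel_measurable borel"
    and dg: "\<forall>y\<ge>0. norm (g y) \<le> M0 / (1+y)^2" and dg1: "\<forall>y\<ge>0. norm (g1 y) \<le> M1 / (1+y)^2"
    and der: "\<forall>y\<ge>0. (g has_vector_derivative g1 y) (at y within {0..})"
    and t: "t > 0"
  shows "(weyl_kernel \<beta> g has_vector_derivative weyl_kernel \<beta> g1 t) (at t)"
  unfolding has_vector_derivative_iff_quotient tendsto_at_iff_sequentially
proof (intro allI impI)
  fix X :: "nat \<Rightarrow> real"
  assume X0: "\<forall>i. X i \<in> UNIV - {0}" and X: "X \<longlonglongrightarrow> 0"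
  from tendstoD[OF X, of "t/2"] t obtain N where N: "\<And>i. i \<ge> N \<Longrightarrow> dist (X i) 0 < t/2"
    by (auto simp: eventually_sequentially)
  have "(\<lambda>i. (weyl_kernel \<beta> g (t + X (i + N)) - weyl_kernel \<beta> g t) /\<^sub>R X (i + N)) \<longlonglongrightarrow> weyl_kernel \<beta> g1 t"
  proof (rule weyl_kernel_quotient_sequence[OF b gm g1m dg dg1 der t])
    show "\<bar>X (i + N)\<bar> < t/2" for i
      using N[of "i + N"] by simp
    show "X (i + N) \<noteq> 0" for i
      using X0 by simp
    show "(\<lambda>i. X (i + N)) \<longlonglongrightarrow> 0"
      by (rule LIMSEQ_ignore_initial_segment[OF X])
  qed
  then have "(\<lambda>i. ((\<lambda>h. (weyl_kernel \<beta> g (t + h) - weyl_kernel \<beta> g t) /\<^sub>R h) \<circ> X) (i + N)) \<longlonglongrightarrow> weyl_kernel \<beta> g1 t"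
    by (simp add: o_def)
  then show "((\<lambda>h. (weyl_kernel \<beta> g (t + h) - weyl_kernel \<beta> g t) /\<^sub>R h) \<circ> X) \<longlonglongrightarrow> weyl_kernel \<beta> g1 t"
    by (rule LIMSEQ_offset)
qed

section \<open>Weyl derivatives of Schwartz functions\<close>

lemma nth_vderiv_Suc: "nth_vderiv (Suc k) g t = vector_derivative (nth_vderiv k g) (at t)"
  by (simp add: nth_vderiv_def)

lemma nth_vderiv_0: "nth_vderiv 0 g = g"
  by (simp add: nth_vderiv_def)

definition weyl_order :: "real \<Rightarrow> nat" where "weyl_order \<alpha> = nat \<lfloor>\<alpha>\<rfloor> + 1"

definition weyl_defect :: "real \<Rightarrow> real" where "weyl_defect \<alpha> = real (weyl_order \<alpha>) - \<alpha>"

lemma weyl_defect_pos: "\<alpha> \<ge> 0 \<Longrightarrow> 0 < weyl_defect \<alpha>" and weyl_defect_le_1: "\<alpha> \<ge> 0 \<Longrightarrow> weyl_defect \<alpha> \<le> 1"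
  unfolding weyl_defect_def weyl_order_def by linarith+

text \<open>The Weyl derivative with its \<open>n\<close> derivatives moved under the integral onto the chain
  (see \<open>weyl_deriv_eq_closed\<close>).\<close>

definition weyl_deriv_closed :: "(nat \<Rightarrow> real \<Rightarrow> complex) \<Rightarrow> real \<Rightarrow> real \<Rightarrow> complex" where
  "weyl_deriv_closed D \<alpha> s = ((-1) ^ weyl_order \<alpha> / Gamma (weyl_defect \<alpha>)) *\<^sub>R weyl_kernel (weyl_defect \<alpha>) (zero_ext (D (weyl_order \<alpha>))) s"

lemma weyl_kernel_chain_derivative:
  assumes chain: "schwartz_chain D" and b: "0 < \<beta>" "\<beta> \<le> 1" and t: "t > 0"
  shows "(weyl_kernel \<beta> (zero_ext (D k)) has_vector_derivative weyl_kernel \<beta> (zero_ext (D (Suc k))) t) (at t)"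
proof -
  obtain M0 where M0: "\<forall>y\<ge>0. norm (zero_ext (D k) y) \<le> M0 / (1+y)^2" using chain_zero_ext_decay[OF chain] by blast
  obtain M1 where M1: "\<forall>y\<ge>0. norm (zero_ext (D (Suc k)) y) \<le> M1 / (1+y)^2" using chain_zero_ext_decay[OF chain] by blast
  show ?thesis
    by (rule weyl_kernel_has_vector_derivative[OF b chain_zero_ext_measurable[OF chain] chain_zero_ext_measurable[OF chain] M0 M1 _ t]) (use chain_zero_ext_derivative[OF chain] in auto)
qed

context
  fixes D :: "nat \<Rightarrow> real \<Rightarrow> complex" and \<psi> :: "real \<Rightarrow> complex"
  assumes chain: "schwartz_chain D" and D0: "\<And>t. t \<ge> 0 \<Longrightarrow> D 0 t = \<psi> t"
begin

lemma weyl_int_eq_weyl_kernel: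
  assumes "x \<ge> 0"
  shows "weyl_int \<beta> \<psi> x = (1 / Gamma \<beta>) *\<^sub>R weyl_kernel \<beta> (zero_ext (D 0)) x"
proof -
  have "(LINT s:{x..}|lborel. ((s - x) powr (\<beta> - 1)) *\<^sub>R \<psi> s) = (LINT s:{x..}|lborel. ((s - x) powr (\<beta> - 1)) *\<^sub>R zero_ext (D 0) s)"
    unfolding set_lebesgue_integral_def
    by (intro Bochner_Integration.integral_cong refl) (use assms D0 in \<open>auto simp: indicator_def zero_ext_eq\<close>)
  thus ?thesis unfolding weyl_int_def by (simp add: set_integral_powr_kernel_eq_weyl_kernel)
qed

lemma nth_vderiv_weyl_int:
  assumes b: "0 < \<beta>" "\<beta> \<le> 1"
  shows "x > 0 \<Longrightarrow> nth_vderiv k (weyl_int \<beta> \<psi>) x = (1 / Gamma \<beta>) *\<^sub>R weyl_kernel \<beta> (zero_ext (D k)) x"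
proof (induction k arbitrary: x)
  case 0
  thus ?case by (simp add: nth_vderiv_0 weyl_int_eq_weyl_kernel)
next
  case (Suc k)
  have "((\<lambda>y. (1 / Gamma \<beta>) *\<^sub>R weyl_kernel \<beta> (zero_ext (D k)) y) has_vector_derivative (1 / Gamma \<beta>) *\<^sub>R weyl_kernel \<beta> (zero_ext (D (Suc k))) x) (at x)"
    by (rule bounded_linear.has_vector_derivative[OF bounded_linear_scaleR_right weyl_kernel_chain_derivative[OF chain b Suc.prems]])
  hence "(nth_vderiv k (weyl_int \<beta> \<psi>) has_vector_derivative (1 / Gamma \<beta>) *\<^sub>R weyl_kernel \<beta> (zero_ext (D (Suc k))) x) (at x)"
    by (rule has_vector_derivative_transform_within_open[where S="{0<..}"]) (use Suc in auto)
  thus ?case by (simp add: nth_vderiv_Suc vector_derivative_at)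
qed

lemma weyl_deriv_eq_closed:
  assumes "\<alpha> \<ge> 0" "s > 0"
  shows "weyl_deriv \<alpha> \<psi> s = weyl_deriv_closed D \<alpha> s"
proof -
  have "weyl_deriv \<alpha> \<psi> s = ((-1) ^ weyl_order \<alpha>) *\<^sub>R nth_vderiv (weyl_order \<alpha>) (weyl_int (weyl_defect \<alpha>) \<psi>) s"
    unfolding weyl_deriv_def weyl_order_def weyl_defect_def by simp
  also have "\<dots> = weyl_deriv_closed D \<alpha> s"
    using nth_vderiv_weyl_int[OF weyl_defect_pos[OF assms(1)] weyl_defect_le_1[OF assms(1)] assms(2)] by (simp add: weyl_deriv_closed_def)
  finally show ?thesis .
qed

lemma weyl_inversion:
  assumes a: "\<alpha> \<ge> 1" and t: "t > 0"
  shows "\<psi> t = (1 / Gamma \<alpha>) *\<^sub>R (LINT s:{t..}|lborel. (s-t) powr (\<alpha>-1) *\<^sub>R weyl_deriv_closed D \<alpha> s)"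
proof -
  \<comment> \<open>The semigroup law for the exponents \<open>\<alpha>\<close> and \<open>\<beta> = n - \<alpha>\<close> turns the double integral into
    the Taylor remainder of order \<open>n - 1\<close> at infinity.\<close>
  define n where "n = weyl_order \<alpha>"
  define \<beta> where "\<beta> = weyl_defect \<alpha>"
  have b: "0 < \<beta>" "\<beta> \<le> 1" using weyl_defect_pos[of \<alpha>] weyl_defect_le_1[of \<alpha>] a by (auto simp: \<beta>_def)
  have n1: "n \<ge> 1" by (simp add: n_def weyl_order_def)
  have ab: "\<alpha> + \<beta> = real n" by (simp add: \<beta>_def weyl_defect_def n_def)
  have a0: "\<alpha> > 0" using a by simp
  define c where "c = ((-1) ^ n / Gamma \<beta>)"
  have "(LINT s:{t..}|lborel. (s-t) powr (\<alpha>-1) *\<^sub>R weyl_deriv_closed D \<alpha> s)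
      = (LINT s:{t..}|lborel. c *\<^sub>R ((s-t) powr (\<alpha>-1) *\<^sub>R (LINT u:{s..}|lborel. (u-s) powr (\<beta>-1) *\<^sub>R zero_ext (D n) u)))"
    unfolding set_lebesgue_integral_def[of _ "{t..}"]
    by (intro Bochner_Integration.integral_cong refl) (simp add: weyl_deriv_closed_def set_integral_powr_kernel_eq_weyl_kernel c_def n_def \<beta>_def)
  also have "\<dots> = c *\<^sub>R (LINT s:{t..}|lborel. (s-t) powr (\<alpha>-1) *\<^sub>R (LINT u:{s..}|lborel. (u-s) powr (\<beta>-1) *\<^sub>R zero_ext (D n) u))"
    unfolding set_lebesgue_integral_def[of _ "{t..}"] integral_scaleR_right[symmetric]
    by (intro Bochner_Integration.integral_cong refl) (simp add: scaleR_left_commute)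
  also have "\<dots> = c *\<^sub>R (Beta \<alpha> \<beta> *\<^sub>R (LINT u:{t..}|lborel. (u-t) powr (\<alpha>+\<beta>-1) *\<^sub>R zero_ext (D n) u))"
    using chain_powr_kernel_semigroup[OF chain a0 b(1), of t n] t by simp
  also have "(LINT u:{t..}|lborel. (u-t) powr (\<alpha>+\<beta>-1) *\<^sub>R zero_ext (D n) u)
      = (LINT u:{t..}|lborel. (u-t) powr (real (n-1)) *\<^sub>R zero_ext (D (0 + (n-1) + 1)) u)"
    using ab n1 by (simp add: of_nat_diff)
  also have "\<dots> = ((-1)^(n-1+1) * fact (n-1)) *\<^sub>R zero_ext (D 0) t"
    by (rule chain_taylor_tail[OF chain]) (use t in auto)
  also have "Beta \<alpha> \<beta> = Gamma \<alpha> * Gamma \<beta> / fact (n-1)"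
  proof -
    have "Gamma (\<alpha> + \<beta>) = fact (n-1)"
      using ab n1 Gamma_fact[of "n-1"] by (simp add: of_nat_diff add.commute)
    then show ?thesis by (simp add: Beta_def)
  qed
  finally have "(LINT s:{t..}|lborel. (s-t) powr (\<alpha>-1) *\<^sub>R weyl_deriv_closed D \<alpha> s)
     = (c * (Gamma \<alpha> * Gamma \<beta> / fact (n-1)) * ((-1)^(n-1+1) * fact (n-1))) *\<^sub>R zero_ext (D 0) t"
    by simp
  also have "c * (Gamma \<alpha> * Gamma \<beta> / fact (n-1)) * ((-1)^(n-1+1) * fact (n-1)) = Gamma \<alpha>"
  proof -
    have g: "Gamma \<beta> > 0" using b by (intro Gamma_real_pos)
    have "(-1::real)^n * (-1)^(n-1+1) = 1" using n1 by (simp flip: power_add)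
    thus ?thesis using g unfolding c_def by (simp add: field_simps)
  qed
  finally show ?thesis using t D0[of t] Gamma_real_pos[OF a0] by (simp add: zero_ext_eq)
qed

end

lemma weyl_deriv_closed_diff:
  assumes S1: "schwartz_chain D1" and S2: "schwartz_chain D2" and a: "\<alpha> \<ge> 0" and s: "s \<ge> 0"
  shows "weyl_deriv_closed (\<lambda>k t. D1 k t - D2 k t) \<alpha> s = weyl_deriv_closed D1 \<alpha> s - weyl_deriv_closed D2 \<alpha> s"
proof -
  have b: "0 < weyl_defect \<alpha>" "weyl_defect \<alpha> \<le> 1" using weyl_defect_pos[OF a] weyl_defect_le_1[OF a] by auto
  obtain M1 where M1: "\<forall>y\<ge>0. norm (zero_ext (D1 (weyl_order \<alpha>)) y) \<le> M1 / (1+y)^2" using chain_zero_ext_decay[OF S1] by blast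
  obtain M2 where M2: "\<forall>y\<ge>0. norm (zero_ext (D2 (weyl_order \<alpha>)) y) \<le> M2 / (1+y)^2" using chain_zero_ext_decay[OF S2] by blast
  note i1 = integrable_weyl_kernel_integrand[OF b chain_zero_ext_measurable[OF S1] M1 s] and i2 = integrable_weyl_kernel_integrand[OF b chain_zero_ext_measurable[OF S2] M2 s]
  have "weyl_kernel (weyl_defect \<alpha>) (zero_ext ((\<lambda>k t. D1 k t - D2 k t) (weyl_order \<alpha>))) s = weyl_kernel (weyl_defect \<alpha>) (zero_ext (D1 (weyl_order \<alpha>))) s - weyl_kernel (weyl_defect \<alpha>) (zero_ext (D2 (weyl_order \<alpha>))) s"
    unfolding zero_ext_diff weyl_kernel_def using i1 i2
    by (simp add: scaleR_diff_right flip: Bochner_Integration.integral_diff)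
  thus ?thesis by (simp add: weyl_deriv_closed_def scaleR_diff_right)
qed

section \<open>Hoelder and Minkowski inequalities\<close>

text \<open>\<open>(q - 1)\<^sup>-\<^sup>1\<^sup>/\<^sup>q\<close> for the conjugate exponent \<open>q = p/(p - 1)\<close>, i.e. the \<open>L\<^sup>q\<close>-norm of \<open>1/s\<close> on
  \<open>[1,\<infinity>)\<close>; for \<open>p = 1\<close> the sup-norm.\<close>

definition holder_tail_const :: "real \<Rightarrow> real" where
  "holder_tail_const p = (if p = 1 then 1 else (p/(p-1) - 1) powr (-(p-1)/p))"

lemma holder_tail_const_pos: "p \<ge> 1 \<Longrightarrow> holder_tail_const p > 0"
  by (cases "p = 1") (auto simp: holder_tail_const_def field_simps)

lemma integral_powr_tail:
  fixes t q :: real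
  assumes t: "t > 0" and q: "q > 1"
  shows "integrable lborel (\<lambda>s. indicator {t..} s * s powr (-q))"
    and "(LBINT s. indicator {t..} s * s powr (-q)) = t powr (1-q) / (q-1)"
proof -
  have hi: "((\<lambda>x. x powr (-q)) has_integral -(t powr (-q+1)) / (-q+1)) {t..}"
    by (rule has_integral_powr_to_inf) (use t q in auto)
  hence "(\<lambda>x. x powr (-q)) absolutely_integrable_on {t..}"
    by (intro nonnegative_absolutely_integrable_1) (auto simp: integrable_on_def)
  hence si: "set_integrable lborel {t..} (\<lambda>x. x powr (-q))"
    by (simp add: absolutely_integrable_on_def set_integrable_def integrable_completion)
  thus "integrable lborel (\<lambda>s. indicator {t..} s * s powr (-q))"
    by (simp add: set_integrable_def)
  have "(LBINT s. indicator {t..} s * s powr (-q)) = (LINT s:{t..}|lborel. s powr (-q))"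
    by (simp add: set_lebesgue_integral_def)
  also have "\<dots> = integral {t..} (\<lambda>x. x powr (-q))" by (rule set_borel_integral_eq_integral(2)[OF si])
  also have "\<dots> = -(t powr (-q+1)) / (-q+1)" using hi by (rule integral_unique)
  also have "\<dots> = t powr (1-q) / (q-1)" using q by (simp add: field_simps)
  finally show "(LBINT s. indicator {t..} s * s powr (-q)) = t powr (1-q) / (q-1)" .
qed

lemma Holder_inequality_nonneg:
  fixes F G :: "'a \<Rightarrow> real"
  assumes p: "p > 1" and q: "q > 1" and pq: "1/p + 1/q = 1"
    and [measurable]: "F \<in> borel_measurable M" "G \<in> borel_measurable M"
    and F0: "\<And>x. F x \<ge> 0" and G0: "\<And>x. G x \<ge> 0"
    and Fi: "integrable M (\<lambda>x. F x powr p)" and Gi: "integrable M (\<lambda>x. G x powr q)"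
  shows "integrable M (\<lambda>x. F x * G x)"
    and "(\<integral>x. F x * G x \<partial>M) \<le> (\<integral>x. F x powr p \<partial>M) powr (1/p) * (\<integral>x. G x powr q \<partial>M) powr (1/q)"
proof -
  have young: "F x * G x \<le> F x powr p / p + G x powr q / q" for x
    by (rule Youngs_inequality[OF p q pq F0 G0])
  show FGi: "integrable M (\<lambda>x. F x * G x)"
    using Fi Gi F0 G0 young
    by (intro Bochner_Integration.integrable_bound[OF Bochner_Integration.integrable_add[OF
          integrable_divide[OF Fi, of p] integrable_divide[OF Gi, of q]] _ AE_I2])
       (auto intro: order_trans[OF _ abs_ge_self])
  define A where "A = (\<integral>x. F x powr p \<partial>M)"
  define B where "B = (\<integral>x. G x powr q \<partial>M)"
  have A0: "A \<ge> 0" and B0: "B \<ge> 0"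
    unfolding A_def B_def by (auto intro!: Bochner_Integration.integral_nonneg)
  consider "A = 0 \<or> B = 0" | "A > 0" "B > 0" using A0 B0 by linarith
  then show "(\<integral>x. F x * G x \<partial>M) \<le> A powr (1/p) * B powr (1/q)"
  proof cases
    case 1
    then have "AE x in M. F x powr p = 0 \<or> G x powr q = 0"
    proof
      assume "A = 0"
      then have "AE x in M. F x powr p = 0"
        using integral_nonneg_eq_0_iff_AE[OF Fi] unfolding A_def by auto
      then show ?thesis by eventually_elim simp
    next
      assume "B = 0"
      then have "AE x in M. G x powr q = 0"
        using integral_nonneg_eq_0_iff_AE[OF Gi] unfolding B_def by auto
      then show ?thesis by eventually_elim simp
    qed
    then have "AE x in M. F x * G x = 0"
      by eventually_elim auto
    then show ?thesis
      by (simp add: integral_eq_zero_AE)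
  next
    case 2
    define a where "a = A powr (1/p)"
    define b where "b = B powr (1/q)"
    have a0: "a > 0" and b0: "b > 0" using 2 by (auto simp: a_def b_def)
    have ap: "a powr p = A" and bq: "b powr q = B"
      using 2 p q by (simp_all add: a_def b_def powr_powr)
    have pointwise: "F x * G x \<le> (a * b) * (F x powr p / (p * A) + G x powr q / (q * B))" for x
    proof -
      have "(F x / a) * (G x / b) \<le> (F x / a) powr p / p + (G x / b) powr q / q"
        by (rule Youngs_inequality[OF p q pq]) (use F0 G0 a0 b0 in auto)
      also have "\<dots> = F x powr p / (p * A) + G x powr q / (q * B)"
        using F0[of x] G0[of x] a0 b0 ap bq by (simp add: powr_divide mult.commute)
      finally show ?thesis
        using a0 b0 by (simp add: field_simps)
    qed
    have "(\<integral>x. F x * G x \<partial>M) \<le> (\<integral>x. (a * b) * (F x powr p / (p * A) + G x powr q / (q * B)) \<partial>M)"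
      using Fi Gi by (intro integral_mono[OF FGi] pointwise integrable_mult_right
          Bochner_Integration.integrable_add integrable_divide)
    also have "\<dots> = (a * b) * (A / (p * A) + B / (q * B))"
      using Fi Gi by (simp add: Bochner_Integration.integral_add A_def B_def)
    also have "\<dots> = a * b" using 2 pq by (simp add: field_simps)
    finally show ?thesis by (simp add: a_def b_def)
  qed
qed

lemma holder_tail_bound_1:
  fixes F :: "real \<Rightarrow> real"
  assumes t: "t > 0" and Fm[measurable]: "F \<in> borel_measurable borel"
    and F0: "\<And>s. F s \<ge> 0" and Fi: "integrable lborel F"
  shows "integrable lborel (\<lambda>s. indicator {t..} s * (F s / s))"
    and "(LBINT s. indicator {t..} s * (F s / s)) \<le> (LBINT s. F s) / t"
proof -
  have bound: "indicator {t..} s * (F s / s) \<le> F s / t" for s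
  proof (cases "s \<ge> t")
    case True
    then have "F s / s \<le> F s / t" using t F0[of s] by (intro divide_left_mono) auto
    then show ?thesis using True by simp
  qed (use F0 t in auto)
  show i: "integrable lborel (\<lambda>s. indicator {t..} s * (F s / s))"
  proof (rule Bochner_Integration.integrable_bound[OF integrable_divide[OF Fi, of t] _ AE_I2])
    show "(\<lambda>s. indicator {t..} s * (F s / s)) \<in> borel_measurable lborel" by measurable
    show "norm (indicator {t..} s * (F s / s)) \<le> norm (F s / t)" for s
      using bound[of s] F0[of s] t by (auto simp: indicator_def)
  qed
  have "(LBINT s. indicator {t..} s * (F s / s)) \<le> (LBINT s. F s / t)"
    by (rule integral_mono[OF i integrable_divide[OF Fi]]) (rule bound)
  then show "(LBINT s. indicator {t..} s * (F s / s)) \<le> (LBINT s. F s) / t"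
    by simp
qed

lemma holder_tail_bound:
  fixes F :: "real \<Rightarrow> real" and p t :: real
  assumes p: "p \<ge> 1" and t: "t > 0" and Fm[measurable]: "F \<in> borel_measurable borel"
    and F0: "\<And>s. F s \<ge> 0" and Fi: "integrable lborel (\<lambda>s. F s powr p)"
  shows "integrable lborel (\<lambda>s. indicator {t..} s * (F s / s))"
    and "(LBINT s. indicator {t..} s * (F s / s)) \<le> holder_tail_const p * t powr (-1/p) * (LBINT s. F s powr p) powr (1/p)"
proof -
  have "integrable lborel (\<lambda>s. indicator {t..} s * (F s / s)) \<and>
        (LBINT s. indicator {t..} s * (F s / s)) \<le> holder_tail_const p * t powr (-1/p) * (LBINT s. F s powr p) powr (1/p)"
  proof (cases "p = 1")
    case True
    then have "(\<lambda>s. F s powr p) = F" using F0 by (simp add: fun_eq_iff)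
    moreover have "(LBINT s. F s) \<ge> 0" using F0 by (intro Bochner_Integration.integral_nonneg) auto
    ultimately show ?thesis
      using holder_tail_bound_1[OF t Fm F0] Fi True t
      by (simp add: holder_tail_const_def powr_minus_divide divide_inverse mult.commute)
  next
    case False
    then have p1: "p > 1" using p by simp
    define q where "q = p / (p-1)"
    have q1: "q > 1" and pq: "1/p + 1/q = 1" using p1 by (simp_all add: q_def field_simps)
    define G where "G s = indicator {t..} s * (1 / s)" for s :: real
    have G0: "G s \<ge> 0" for s using t by (auto simp: G_def indicator_def)
    have Gq: "G s powr q = indicator {t..} s * s powr (-q)" for s
      using t q1 by (auto simp: G_def indicator_def powr_minus_divide powr_divide)
    have FG: "F s * G s = indicator {t..} s * (F s / s)" for s
      by (simp add: G_def)
    have G_norm: "(LBINT s. G s powr q) powr (1/q) = t powr (-1/p) * holder_tail_const p"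
    proof -
      have "(LBINT s. G s powr q) powr (1/q) = t powr ((1-q) * (1/q)) / (q-1) powr (1/q)"
        unfolding Gq integral_powr_tail(2)[OF t q1] using t q1 by (simp add: powr_divide powr_powr)
      also have "(1-q) * (1/q) = -1/p" using p1 by (simp add: q_def field_simps)
      also have "1 / (q-1) powr (1/q) = holder_tail_const p"
      proof -
        have "1 / (q-1) powr (1/q) = (q-1) powr (-(1/q))" using q1 by (simp add: powr_minus_divide)
        also have "-(1/q) = -(p-1)/p" using p1 by (simp add: q_def field_simps)
        finally show ?thesis using False by (simp add: holder_tail_const_def q_def)
      qed
      ultimately show ?thesis by (simp add: divide_inverse)
    qed
    have Gm: "G \<in> borel_measurable lborel"
      unfolding G_def by measurable
    have Gi: "integrable lborel (\<lambda>s. G s powr q)"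
      unfolding Gq by (rule integral_powr_tail(1)[OF t q1])
    have "F \<in> borel_measurable lborel"
      by simp
    from Holder_inequality_nonneg[OF p1 q1 pq this Gm F0 G0 Fi Gi] G_norm show ?thesis
      unfolding FG by (simp add: mult_ac)
  qed
  then show "integrable lborel (\<lambda>s. indicator {t..} s * (F s / s))"
    and "(LBINT s. indicator {t..} s * (F s / s)) \<le> holder_tail_const p * t powr (-1/p) * (LBINT s. F s powr p) powr (1/p)"
    by auto
qed

lemma powr_convex_nonneg:
  fixes x y l p :: real
  assumes p: "p \<ge> 1" and x: "x \<ge> 0" and y: "y \<ge> 0" and l: "0 \<le> l" "l \<le> 1"
  shows "(l * x + (1 - l) * y) powr p \<le> l * x powr p + (1 - l) * y powr p"
proof -
  have le1: "c powr p \<le> c" if "0 \<le> c" "c \<le> 1" for c :: real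
  proof (cases "c = 0")
    case False
    hence "c powr p \<le> c powr 1" using that p by (intro powr_mono') auto
    thus ?thesis using that by simp
  qed simp
  show ?thesis
  proof (cases "x = 0 \<or> y = 0")
    case True
    thus ?thesis
    proof
      assume x0: "x = 0"
      have "((1 - l) * y) powr p = (1 - l) powr p * y powr p" using y l by (simp add: powr_mult)
      also have "\<dots> \<le> (1 - l) * y powr p" using le1[of "1-l"] l by (intro mult_right_mono) auto
      finally show ?thesis using x0 by simp
    next
      assume y0: "y = 0"
      have "(l * x) powr p = l powr p * x powr p" using x l by (simp add: powr_mult)
      also have "\<dots> \<le> l * x powr p" using le1[of l] l by (intro mult_right_mono) auto
      finally show ?thesis using y0 by simp
    qed
  next
    case False
    hence "x > 0" "y > 0" using x y by auto
    thus ?thesis using powr_convex[OF p] l unfolding convex_on_def by auto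
  qed
qed

lemma integrable_powr_add:
  fixes u v :: "'a \<Rightarrow> real"
  assumes p0: "p > 0" and [measurable]: "u \<in> borel_measurable M" "v \<in> borel_measurable M"
    and u0: "\<And>x. u x \<ge> 0" and v0: "\<And>x. v x \<ge> 0"
    and ui: "integrable M (\<lambda>x. u x powr p)" and vi: "integrable M (\<lambda>x. v x powr p)"
  shows "integrable M (\<lambda>x. (u x + v x) powr p)"
proof (rule Bochner_Integration.integrable_bound[OF integrable_mult_right[OF Bochner_Integration.integrable_add[OF ui vi], of "2 powr p"] _ AE_I2])
  show "(\<lambda>x. (u x + v x) powr p) \<in> borel_measurable M" by measurable
  fix x
  have "(u x + v x) powr p \<le> (2 * max (u x) (v x)) powr p"
    using u0[of x] v0[of x] p0 by (intro powr_mono2) auto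
  also have "\<dots> = 2 powr p * max (u x) (v x) powr p" using u0[of x] v0[of x] by (simp add: powr_mult)
  also have "\<dots> \<le> 2 powr p * (u x powr p + v x powr p)"
    by (intro mult_left_mono) (auto simp: max_def)
  finally show "norm ((u x + v x) powr p) \<le> norm (2 powr p * (u x powr p + v x powr p))" by simp
qed

lemma powr_add_le_weighted:
  fixes x y a b p :: real
  assumes p: "p \<ge> 1" and x: "x \<ge> 0" and y: "y \<ge> 0" and a: "a > 0" and b: "b > 0"
  shows "(x + y) powr p \<le> (a + b) powr p * (a / (a + b) * (x powr p / a powr p) + (1 - a / (a + b)) * (y powr p / b powr p))"
proof -
  define l where "l = a / (a + b)"
  have l: "0 \<le> l" "l \<le> 1" and l1: "1 - l = b / (a + b)"
    using a b by (auto simp: l_def field_simps)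
  have "l * (x / a) = x / (a + b)" "(1 - l) * (y / b) = y / (a + b)"
    using a b unfolding l1 by (simp_all add: l_def)
  then have "(x + y) / (a + b) = l * (x / a) + (1 - l) * (y / b)"
    by (simp add: add_divide_distrib)
  then have "((x + y) / (a + b)) powr p \<le> l * (x / a) powr p + (1 - l) * (y / b) powr p"
    using powr_convex_nonneg[OF p _ _ l, of "x / a" "y / b"] x y a b by simp
  also have "(x / a) powr p = x powr p / a powr p" using x a by (simp add: powr_divide)
  also have "(y / b) powr p = y powr p / b powr p" using y b by (simp add: powr_divide)
  also have "((x + y) / (a + b)) powr p = (x + y) powr p / (a + b) powr p"
    using x y a b by (simp add: powr_divide)
  finally show ?thesis
    using a b by (simp add: l_def field_simps)
qed

lemma Minkowski_inequality:
  fixes u v w :: "'a \<Rightarrow> real" and p :: real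
  assumes p: "p \<ge> 1"
    and um[measurable]: "u \<in> borel_measurable M" and vm[measurable]: "v \<in> borel_measurable M"
    and wm[measurable]: "w \<in> borel_measurable M"
    and u0: "\<And>x. u x \<ge> 0" and v0: "\<And>x. v x \<ge> 0" and w0: "\<And>x. w x \<ge> 0"
    and wuv: "\<And>x. w x \<le> u x + v x"
    and ui: "integrable M (\<lambda>x. u x powr p)" and vi: "integrable M (\<lambda>x. v x powr p)"
  shows "integrable M (\<lambda>x. w x powr p)"
    and "(\<integral>x. w x powr p \<partial>M) powr (1/p) \<le> (\<integral>x. u x powr p \<partial>M) powr (1/p) + (\<integral>x. v x powr p \<partial>M) powr (1/p)"
proof -
  have p0: "p > 0" using p by simp
  have uvi: "integrable M (\<lambda>x. (u x + v x) powr p)"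
    by (rule integrable_powr_add[OF p0 um vm u0 v0 ui vi])
  have wle: "w x powr p \<le> (u x + v x) powr p" for x
    using wuv[of x] w0[of x] p0 by (intro powr_mono2) auto
  show wi: "integrable M (\<lambda>x. w x powr p)"
    by (rule Bochner_Integration.integrable_bound[OF uvi _ AE_I2]) (use wle u0 v0 w0 in auto)
  define a where "a = (\<integral>x. u x powr p \<partial>M) powr (1/p)"
  define b where "b = (\<integral>x. v x powr p \<partial>M) powr (1/p)"
  have Ia: "(\<integral>x. u x powr p \<partial>M) \<ge> 0" and Ib: "(\<integral>x. v x powr p \<partial>M) \<ge> 0"
    by (auto intro!: Bochner_Integration.integral_nonneg)
  have a0: "a \<ge> 0" and b0: "b \<ge> 0" by (auto simp: a_def b_def)
  have ap: "a powr p = (\<integral>x. u x powr p \<partial>M)" using Ia p0 by (simp add: a_def powr_powr)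
  have bp: "b powr p = (\<integral>x. v x powr p \<partial>M)" using Ib p0 by (simp add: b_def powr_powr)
  show "(\<integral>x. w x powr p \<partial>M) powr (1/p) \<le> (\<integral>x. u x powr p \<partial>M) powr (1/p) + (\<integral>x. v x powr p \<partial>M) powr (1/p)"
    unfolding a_def[symmetric] b_def[symmetric]
  proof (rule field_le_epsilon)
    fix e :: real assume e: "e > 0"
    define a' where "a' = a + e/2"
    define b' where "b' = b + e/2"
    have a'0: "a' > 0" and b'0: "b' > 0" using a0 b0 e by (auto simp: a'_def b'_def)
    define l where "l = a' / (a' + b')"
    have l: "0 \<le> l" "l \<le> 1" using a'0 b'0 by (auto simp: l_def)
    have pt: "(u x + v x) powr p \<le> (a' + b') powr p * (l * (u x powr p / a' powr p) + (1 - l) * (v x powr p / b' powr p))" for x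
      unfolding l_def by (rule powr_add_le_weighted[OF p u0 v0 a'0 b'0])
    have ri: "integrable M (\<lambda>x. (a' + b') powr p * (l * (u x powr p / a' powr p) + (1 - l) * (v x powr p / b' powr p)))"
      using ui vi by (intro integrable_mult_right Bochner_Integration.integrable_add integrable_divide) auto
    have "(\<integral>x. w x powr p \<partial>M) \<le> (\<integral>x. (u x + v x) powr p \<partial>M)"
      by (rule integral_mono[OF wi uvi wle])
    also have "\<dots> \<le> (\<integral>x. (a' + b') powr p * (l * (u x powr p / a' powr p) + (1 - l) * (v x powr p / b' powr p)) \<partial>M)"
      by (rule integral_mono[OF uvi ri pt])
    also have "\<dots> = (a' + b') powr p * (l * (a powr p / a' powr p) + (1 - l) * (b powr p / b' powr p))"
      using ui vi by (simp add: Bochner_Integration.integral_add ap bp)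
    also have "\<dots> \<le> (a' + b') powr p * (l * 1 + (1 - l) * 1)"
    proof -
      have "a powr p \<le> a' powr p" using a0 e p0 by (intro powr_mono2) (auto simp: a'_def)
      hence "a powr p / a' powr p \<le> 1" using a'0 by simp
      moreover have "b powr p \<le> b' powr p" using b0 e p0 by (intro powr_mono2) (auto simp: b'_def)
      hence "b powr p / b' powr p \<le> 1" using b'0 by simp
      ultimately show ?thesis using l a'0 b'0
        by (intro mult_left_mono add_mono mult_left_mono) auto
    qed
    also have "\<dots> = (a' + b') powr p" by simp
    finally have "(\<integral>x. w x powr p \<partial>M) \<le> (a' + b') powr p" .
    hence "(\<integral>x. w x powr p \<partial>M) powr (1/p) \<le> ((a' + b') powr p) powr (1/p)"
      using p0 by (intro powr_mono2) (auto intro!: Bochner_Integration.integral_nonneg simp: w0)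
    also have "\<dots> = a' + b'" using a'0 b'0 p0 by (simp add: powr_powr)
    finally show "(\<integral>x. w x powr p \<partial>M) powr (1/p) \<le> a + b + e" by (simp add: a'_def b'_def)
  qed
qed

section \<open>The weighted estimate for Schwartz functions\<close>

definition weighted_weyl_deriv :: "(nat \<Rightarrow> real \<Rightarrow> complex) \<Rightarrow> real \<Rightarrow> real \<Rightarrow> real" where
  "weighted_weyl_deriv D \<alpha> s = indicator {0<..} s * (s powr \<alpha> * norm (weyl_deriv_closed D \<alpha> s))"

lemma weighted_weyl_deriv_nonneg: "weighted_weyl_deriv D \<alpha> s \<ge> 0"
  by (simp add: weighted_weyl_deriv_def)

lemma weighted_weyl_deriv_le_add:
  assumes "s > 0 \<Longrightarrow> norm (weyl_deriv_closed D \<alpha> s) \<le> norm (weyl_deriv_closed D' \<alpha> s) + norm (weyl_deriv_closed D'' \<alpha> s)"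
  shows "weighted_weyl_deriv D \<alpha> s \<le> weighted_weyl_deriv D' \<alpha> s + weighted_weyl_deriv D'' \<alpha> s"
proof (cases "s > 0")
  case True
  then have "s powr \<alpha> * norm (weyl_deriv_closed D \<alpha> s)
      \<le> s powr \<alpha> * (norm (weyl_deriv_closed D' \<alpha> s) + norm (weyl_deriv_closed D'' \<alpha> s))"
    using assms by (intro mult_left_mono) auto
  then show ?thesis using True by (simp add: weighted_weyl_deriv_def algebra_simps)
qed (simp add: weighted_weyl_deriv_def)

context
  fixes D :: "nat \<Rightarrow> real \<Rightarrow> complex"
  assumes chain: "schwartz_chain D"
begin

lemma weyl_deriv_closed_measurable[measurable]: "weyl_deriv_closed D \<alpha> \<in> borel_measurable borel"
proof -
  have m: "weyl_kernel (weyl_defect \<alpha>) (zero_ext (D (weyl_order \<alpha>))) \<in> borel_measurable borel" by (rule weyl_kernel_measurable[OF chain_zero_ext_measurable[OF chain]])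
  have e: "weyl_deriv_closed D \<alpha> = (\<lambda>s. ((-1) ^ weyl_order \<alpha> / Gamma (weyl_defect \<alpha>)) *\<^sub>R weyl_kernel (weyl_defect \<alpha>) (zero_ext (D (weyl_order \<alpha>))) s)"
    by (rule ext) (simp add: weyl_deriv_closed_def)
  show ?thesis unfolding e by (intro borel_measurable_scaleR borel_measurable_const m)
qed

lemma weighted_weyl_deriv_measurable[measurable]: "weighted_weyl_deriv D \<alpha> \<in> borel_measurable borel"
  unfolding weighted_weyl_deriv_def by measurable

lemma weyl_deriv_closed_decay:
  assumes a: "\<alpha> \<ge> 0"
  shows "\<exists>C. \<forall>s\<ge>0. norm (weyl_deriv_closed D \<alpha> s) \<le> C / (1+s)^k"
proof -
  obtain M where M: "\<forall>y\<ge>0. norm (zero_ext (D (weyl_order \<alpha>)) y) \<le> M / (1+y)^(k+2)"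
    using chain_zero_ext_decay[OF chain] by blast
  have b: "0 < weyl_defect \<alpha>" "weyl_defect \<alpha> \<le> 1" using weyl_defect_pos[OF a] weyl_defect_le_1[OF a] by auto
  obtain C where C: "\<forall>s\<ge>0. norm (weyl_kernel (weyl_defect \<alpha>) (zero_ext (D (weyl_order \<alpha>))) s) \<le> C / (1+s)^k"
    using weyl_kernel_decay[OF b chain_zero_ext_measurable[OF chain] M] by blast
  have "norm (weyl_deriv_closed D \<alpha> s) \<le> (\<bar>1 / Gamma (weyl_defect \<alpha>)\<bar> * C) / (1+s)^k" if "s \<ge> 0" for s
  proof -
    have "norm (weyl_deriv_closed D \<alpha> s) = \<bar>1 / Gamma (weyl_defect \<alpha>)\<bar> * norm (weyl_kernel (weyl_defect \<alpha>) (zero_ext (D (weyl_order \<alpha>))) s)"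
      by (simp add: weyl_deriv_closed_def power_abs)
    also have "\<dots> \<le> \<bar>1 / Gamma (weyl_defect \<alpha>)\<bar> * (C / (1+s)^k)"
      using C that by (intro mult_left_mono) auto
    finally show ?thesis by simp
  qed
  then show ?thesis by blast
qed

lemma integrable_weighted_weyl_deriv_powr:
  assumes a: "\<alpha> \<ge> 0" and p: "p \<ge> 1"
  shows "integrable lborel (\<lambda>s. weighted_weyl_deriv D \<alpha> s powr p)"
proof -
  define k where "k = nat \<lceil>\<alpha>\<rceil> + 2"
  have k: "real k \<ge> \<alpha> + 2" unfolding k_def by linarith
  obtain C where C: "\<forall>s\<ge>0. norm (weyl_deriv_closed D \<alpha> s) \<le> C / (1+s)^k" using weyl_deriv_closed_decay[OF a] by blast
  have C0: "C \<ge> 0" using C by (rule decay_bound_nonneg)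
  have dom: "integrable lborel (\<lambda>s. C powr p * (indicator {0..} s *\<^sub>R (1/(1+s)^2)))"
    using set_integrable_inverse_square by (intro integrable_mult_right) (simp add: set_integrable_def)
  show ?thesis
  proof (rule Bochner_Integration.integrable_bound[OF dom _ AE_I2])
    show "(\<lambda>s. weighted_weyl_deriv D \<alpha> s powr p) \<in> borel_measurable lborel" by measurable
    fix s :: real
    show "norm (weighted_weyl_deriv D \<alpha> s powr p) \<le> norm (C powr p * (indicator {0..} s *\<^sub>R (1/(1+s)^2)))"
    proof (cases "s > 0")
      case False thus ?thesis by (simp add: weighted_weyl_deriv_def)
    next
      case True
      have "weighted_weyl_deriv D \<alpha> s = s powr \<alpha> * norm (weyl_deriv_closed D \<alpha> s)" using True by (simp add: weighted_weyl_deriv_def)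
      also have "\<dots> \<le> (1+s) powr \<alpha> * (C / (1+s)^k)"
        using C True a by (intro mult_mono powr_mono2) auto
      also have "\<dots> = C * (1+s) powr (\<alpha> - real k)"
        using True by (simp add: powr_diff powr_realpow)
      also have "\<dots> \<le> C * (1+s) powr (-2)"
        using True k C0 by (intro mult_left_mono powr_mono) auto
      finally have Fb: "weighted_weyl_deriv D \<alpha> s \<le> C * (1+s) powr (-2)" .
      have "weighted_weyl_deriv D \<alpha> s powr p \<le> (C * (1+s) powr (-2)) powr p"
        using Fb weighted_weyl_deriv_nonneg[of D \<alpha> s] p by (intro powr_mono2) auto
      also have "\<dots> = C powr p * (1+s) powr (-2*p)"
        using True C0 by (simp add: powr_mult powr_powr)
      also have "\<dots> \<le> C powr p * (1+s) powr (-2)"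
        using True p by (intro mult_left_mono powr_mono) auto
      also have "(1+s) powr (-2) = 1/(1+s)^2"
        using True by (simp add: powr_minus_divide powr_realpow)
      finally show ?thesis using True by simp
    qed
  qed
qed

end

context
  fixes D :: "nat \<Rightarrow> real \<Rightarrow> complex" and \<psi> :: "real \<Rightarrow> complex"
  assumes chain: "schwartz_chain D" and D0: "\<And>t. t \<ge> 0 \<Longrightarrow> D 0 t = \<psi> t"
begin

lemma wnorm_eq_weighted:
  assumes a: "\<alpha> \<ge> 0" and p: "p \<ge> 1"
  shows "wnorm \<alpha> p \<psi> = (1 / Gamma (\<alpha> + 1)) * (LBINT s. weighted_weyl_deriv D \<alpha> s powr p) powr (1/p)"
proof -
  have "(LINT t:{0<..}|lborel. norm (weyl_deriv \<alpha> \<psi> t) powr p * t powr (\<alpha> * p)) = (LBINT s. weighted_weyl_deriv D \<alpha> s powr p)"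
    unfolding set_lebesgue_integral_def
  proof (intro Bochner_Integration.integral_cong refl)
    fix s :: real
    show "indicator {0<..} s *\<^sub>R (norm (weyl_deriv \<alpha> \<psi> s) powr p * s powr (\<alpha> * p)) = weighted_weyl_deriv D \<alpha> s powr p"
    proof (cases "s > 0")
      case True
      have "weighted_weyl_deriv D \<alpha> s powr p = (s powr \<alpha>) powr p * norm (weyl_deriv_closed D \<alpha> s) powr p"
        using True by (simp add: weighted_weyl_deriv_def powr_mult)
      thus ?thesis using True weyl_deriv_eq_closed[OF chain D0 a True] by (simp add: powr_powr mult_ac)
    qed (simp add: weighted_weyl_deriv_def)
  qed
  thus ?thesis unfolding wnorm_def by simp
qed

lemma schwartz_chain_tail_bound:
  assumes a: "\<alpha> \<ge> 1" and t: "t > 0"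
    and int: "integrable lborel (\<lambda>s. indicator {t..} s * (weighted_weyl_deriv D \<alpha> s / s))"
  shows "norm (\<psi> t) \<le> (1 / Gamma \<alpha>) * (LBINT s. indicator {t..} s * (weighted_weyl_deriv D \<alpha> s / s))"
proof -
  note [measurable] = weyl_deriv_closed_measurable[OF chain]
  have Ga: "Gamma \<alpha> > 0" using a by (intro Gamma_real_pos) simp
  have pw: "norm (indicator {t..} s *\<^sub>R ((s-t) powr (\<alpha>-1) *\<^sub>R weyl_deriv_closed D \<alpha> s)) \<le> indicator {t..} s * (weighted_weyl_deriv D \<alpha> s / s)" for s
  proof (cases "s \<ge> t")
    case True
    have s0: "s > 0" using True t by simp
    have "norm (indicator {t..} s *\<^sub>R ((s-t) powr (\<alpha>-1) *\<^sub>R weyl_deriv_closed D \<alpha> s)) = (s-t) powr (\<alpha>-1) * norm (weyl_deriv_closed D \<alpha> s)"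
      using True by simp
    also have "\<dots> \<le> s powr (\<alpha>-1) * norm (weyl_deriv_closed D \<alpha> s)"
      using True t a by (intro mult_right_mono powr_mono2) auto
    also have "s powr (\<alpha>-1) = s powr \<alpha> / s" using s0 by (simp add: powr_diff)
    finally show ?thesis using True s0 by (simp add: weighted_weyl_deriv_def)
  qed simp
  have i1: "integrable lborel (\<lambda>s. norm (indicator {t..} s *\<^sub>R ((s-t) powr (\<alpha>-1) *\<^sub>R weyl_deriv_closed D \<alpha> s)))"
  proof (rule Bochner_Integration.integrable_bound[OF int _ AE_I2])
    show "(\<lambda>s. norm (indicator {t..} s *\<^sub>R ((s-t) powr (\<alpha>-1) *\<^sub>R weyl_deriv_closed D \<alpha> s))) \<in> borel_measurable lborel"
      by measurable
    fix s
    have h0: "indicator {t..} s * (weighted_weyl_deriv D \<alpha> s / s) \<ge> 0" using weighted_weyl_deriv_nonneg[of D \<alpha> s] t by (auto simp: indicator_def)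
    have e: "norm (indicator {t..} s * (weighted_weyl_deriv D \<alpha> s / s)) = indicator {t..} s * (weighted_weyl_deriv D \<alpha> s / s)"
      by (simp only: real_norm_def abs_of_nonneg[OF h0])
    show "norm (norm (indicator {t..} s *\<^sub>R ((s-t) powr (\<alpha>-1) *\<^sub>R weyl_deriv_closed D \<alpha> s))) \<le> norm (indicator {t..} s * (weighted_weyl_deriv D \<alpha> s / s))"
      unfolding e using pw[of s] by simp
  qed
  have "norm (\<psi> t) = (1 / Gamma \<alpha>) * norm (LINT s:{t..}|lborel. (s-t) powr (\<alpha>-1) *\<^sub>R weyl_deriv_closed D \<alpha> s)"
    using weyl_inversion[OF chain D0 a t] Ga by (metis norm_scaleR abs_of_pos zero_less_divide_1_iff)
  also have "\<dots> \<le> (1 / Gamma \<alpha>) * (LBINT s. indicator {t..} s * (weighted_weyl_deriv D \<alpha> s / s))"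
  proof (intro mult_left_mono)
    have "norm (LINT s:{t..}|lborel. (s-t) powr (\<alpha>-1) *\<^sub>R weyl_deriv_closed D \<alpha> s) \<le> (LBINT s. norm (indicator {t..} s *\<^sub>R ((s-t) powr (\<alpha>-1) *\<^sub>R weyl_deriv_closed D \<alpha> s)))"
      unfolding set_lebesgue_integral_def by (rule integral_norm_bound)
    also have "\<dots> \<le> (LBINT s. indicator {t..} s * (weighted_weyl_deriv D \<alpha> s / s))"
      by (rule integral_mono[OF i1 int pw])
    finally show "norm (LINT s:{t..}|lborel. (s-t) powr (\<alpha>-1) *\<^sub>R weyl_deriv_closed D \<alpha> s) \<le> (LBINT s. indicator {t..} s * (weighted_weyl_deriv D \<alpha> s / s))" .
  qed (use Ga in simp)
  finally show ?thesis .
qed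

lemma schwartz_chain_weighted_bound:
  assumes a: "\<alpha> \<ge> 1" and p: "p \<ge> 1" and t: "t > 0"
  shows "t powr (1/p) * norm (\<psi> t) \<le> (\<alpha> * holder_tail_const p) * wnorm \<alpha> p \<psi>"
proof -
  have a0: "\<alpha> \<ge> 0" and a0': "\<alpha> > 0" using a by auto
  have Ga: "Gamma \<alpha> > 0" by (rule Gamma_real_pos[OF a0'])
  note ht = holder_tail_bound[OF p t weighted_weyl_deriv_measurable[OF chain] weighted_weyl_deriv_nonneg
    integrable_weighted_weyl_deriv_powr[OF chain a0 p]]
  define A where "A = (LBINT s. weighted_weyl_deriv D \<alpha> s powr p)"
  have "norm (\<psi> t) \<le> (1 / Gamma \<alpha>) * (LBINT s. indicator {t..} s * (weighted_weyl_deriv D \<alpha> s / s))"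
    by (rule schwartz_chain_tail_bound[OF a t ht(1)])
  also have "\<dots> \<le> (1 / Gamma \<alpha>) * (holder_tail_const p * t powr (-1/p) * A powr (1/p))"
    using ht(2) Ga by (intro mult_left_mono) (auto simp: A_def)
  finally have n: "norm (\<psi> t) \<le> (1 / Gamma \<alpha>) * (holder_tail_const p * t powr (-1/p) * A powr (1/p))" .
  have "t powr (1/p) * norm (\<psi> t) \<le> t powr (1/p) * ((1 / Gamma \<alpha>) * (holder_tail_const p * t powr (-1/p) * A powr (1/p)))"
    using n by (intro mult_left_mono) auto
  also have "\<dots> = (1 / Gamma \<alpha>) * holder_tail_const p * A powr (1/p) * (t powr (1/p) * t powr (-1/p))" by (simp add: mult_ac)
  also have "t powr (1/p) * t powr (-1/p) = 1" using t by (simp add: powr_add[symmetric])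
  also have "(1 / Gamma \<alpha>) * holder_tail_const p * A powr (1/p) * 1 = (\<alpha> * holder_tail_const p) * ((1 / Gamma (\<alpha> + 1)) * A powr (1/p))"
  proof -
    have "\<alpha> \<notin> \<int>\<^sub>\<le>\<^sub>0" using a0' nonpos_Ints_nonpos by force
    hence g1: "Gamma (\<alpha> + 1) = \<alpha> * Gamma \<alpha>" by (rule Gamma_plus1)
    show ?thesis unfolding g1 using Ga a0' by (simp add: field_simps)
  qed
  also have "(1 / Gamma (\<alpha> + 1)) * A powr (1/p) = wnorm \<alpha> p \<psi>"
    using wnorm_eq_weighted[OF a0 p] by (simp add: A_def)
  finally show ?thesis .
qed

end

lemma wnorm_diff_le:
  assumes a: "\<alpha> \<ge> 0" and p: "p \<ge> 1"
    and S1: "schwartz_chain D1" and E1: "\<And>t. t \<ge> 0 \<Longrightarrow> D1 0 t = \<psi>1 t"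
    and S2: "schwartz_chain D2" and E2: "\<And>t. t \<ge> 0 \<Longrightarrow> D2 0 t = \<psi>2 t"
  shows "\<bar>wnorm \<alpha> p \<psi>1 - wnorm \<alpha> p \<psi>2\<bar> \<le> wnorm \<alpha> p (\<lambda>t. \<psi>1 t - \<psi>2 t)"
proof -
  define D3 where "D3 = (\<lambda>k t. D1 k t - D2 k t)"
  have S3: "schwartz_chain D3" unfolding D3_def by (rule schwartz_chain_diff[OF S1 S2])
  have E3: "D3 0 t = \<psi>1 t - \<psi>2 t" if "t \<ge> 0" for t using E1[OF that] E2[OF that] by (simp add: D3_def)
  have W3: "weyl_deriv_closed D3 \<alpha> s = weyl_deriv_closed D1 \<alpha> s - weyl_deriv_closed D2 \<alpha> s" if "s \<ge> 0" for s
    unfolding D3_def by (rule weyl_deriv_closed_diff[OF S1 S2 a that])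
  have G: "Gamma (\<alpha> + 1) > 0" using a by (intro Gamma_real_pos) auto
  define N where "N D = (LBINT s. weighted_weyl_deriv D \<alpha> s powr p) powr (1/p)" for D
  have w1: "wnorm \<alpha> p \<psi>1 = (1 / Gamma (\<alpha> + 1)) * N D1" unfolding N_def by (rule wnorm_eq_weighted[OF S1 E1 a p])
  have w2: "wnorm \<alpha> p \<psi>2 = (1 / Gamma (\<alpha> + 1)) * N D2" unfolding N_def by (rule wnorm_eq_weighted[OF S2 E2 a p])
  have w3: "wnorm \<alpha> p (\<lambda>t. \<psi>1 t - \<psi>2 t) = (1 / Gamma (\<alpha> + 1)) * N D3" unfolding N_def by (rule wnorm_eq_weighted[OF S3 E3 a p])
  have Minkowski: "N A \<le> N B + N D3"
    if A: "schwartz_chain A" and B: "schwartz_chain B"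
      and le: "\<And>s. weighted_weyl_deriv A \<alpha> s \<le> weighted_weyl_deriv B \<alpha> s + weighted_weyl_deriv D3 \<alpha> s" for A B
    unfolding N_def
    by (rule Minkowski_inequality(2)[OF p weighted_weyl_deriv_measurable[OF B, folded measurable_lborel2]
          weighted_weyl_deriv_measurable[OF S3, folded measurable_lborel2]
          weighted_weyl_deriv_measurable[OF A, folded measurable_lborel2]
          weighted_weyl_deriv_nonneg weighted_weyl_deriv_nonneg weighted_weyl_deriv_nonneg le
          integrable_weighted_weyl_deriv_powr[OF B a p] integrable_weighted_weyl_deriv_powr[OF S3 a p]])
  have m1: "N D1 \<le> N D2 + N D3"
  proof (rule Minkowski[OF S1 S2 weighted_weyl_deriv_le_add])
    fix s :: real assume "s > 0"
    then show "norm (weyl_deriv_closed D1 \<alpha> s) \<le> norm (weyl_deriv_closed D2 \<alpha> s) + norm (weyl_deriv_closed D3 \<alpha> s)"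
      using W3[of s] norm_triangle_ineq[of "weyl_deriv_closed D2 \<alpha> s" "weyl_deriv_closed D1 \<alpha> s - weyl_deriv_closed D2 \<alpha> s"]
      by simp
  qed
  have m2: "N D2 \<le> N D1 + N D3"
  proof (rule Minkowski[OF S2 S1 weighted_weyl_deriv_le_add])
    fix s :: real assume "s > 0"
    then show "norm (weyl_deriv_closed D2 \<alpha> s) \<le> norm (weyl_deriv_closed D1 \<alpha> s) + norm (weyl_deriv_closed D3 \<alpha> s)"
      using W3[of s] norm_triangle_ineq4[of "weyl_deriv_closed D1 \<alpha> s" "weyl_deriv_closed D1 \<alpha> s - weyl_deriv_closed D2 \<alpha> s"]
      by simp
  qed
  have "\<bar>N D1 - N D2\<bar> \<le> N D3" using m1 m2 by linarith
  hence "(1 / Gamma (\<alpha> + 1)) * \<bar>N D1 - N D2\<bar> \<le> (1 / Gamma (\<alpha> + 1)) * N D3"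
    using G by (intro mult_left_mono) auto
  moreover have "\<bar>(1 / Gamma (\<alpha> + 1)) * N D1 - (1 / Gamma (\<alpha> + 1)) * N D2\<bar> = (1 / Gamma (\<alpha> + 1)) * \<bar>N D1 - N D2\<bar>"
    using G by (simp add: abs_mult flip: right_diff_distrib diff_divide_distrib)
  ultimately show ?thesis unfolding w1 w2 w3 by simp
qed

lemma schwartz_plus_diff:
  assumes "schwartz_plus f" "schwartz_plus g"
  shows "schwartz_plus (\<lambda>t. f t - g t)"
proof -
  obtain D1 D2 where "schwartz_chain D1" "\<forall>t\<ge>0. D1 0 t = f t" "schwartz_chain D2" "\<forall>t\<ge>0. D2 0 t = g t"
    using assms unfolding schwartz_plus_iff_chain by blast
  then show ?thesis
    unfolding schwartz_plus_iff_chain by (intro exI[of _ "\<lambda>k t. D1 k t - D2 k t"]) (simp add: schwartz_chain_diff)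
qed

lemma schwartz_plus_continuous_on:
  assumes "schwartz_plus f"
  shows "continuous_on {0..} f"
proof -
  obtain D where D: "schwartz_chain D" "\<forall>t\<ge>0. D 0 t = f t"
    using assms unfolding schwartz_plus_iff_chain by blast
  show ?thesis
    by (rule continuous_on_eq[OF schwartz_chain_continuous[OF D(1)]]) (use D(2) in auto)
qed

lemma schwartz_plus_tendsto_0:
  assumes "schwartz_plus f"
  shows "(f \<longlongrightarrow> 0) at_top"
proof -
  obtain D where D: "schwartz_chain D" "\<forall>t\<ge>0. D 0 t = f t"
    using assms unfolding schwartz_plus_iff_chain by blast
  have "\<forall>\<^sub>F t in at_top. zero_ext (D 0) t = f t"
    using D(2) by (intro eventually_at_top_linorderI[of 0]) (simp add: zero_ext_eq)
  with chain_zero_ext_tendsto_0[OF D(1)] show ?thesis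
    by (rule tendsto_cong[THEN iffD1, rotated])
qed

theorem schwartz_plus_weighted_sup_bound:
  assumes "schwartz_plus \<psi>" "\<alpha> \<ge> 1" "p \<ge> 1" "t > 0"
  shows "t powr (1/p) * norm (\<psi> t) \<le> \<alpha> * holder_tail_const p * wnorm \<alpha> p \<psi>"
proof -
  obtain D where D: "schwartz_chain D" "\<forall>t\<ge>0. D 0 t = \<psi> t"
    using assms(1) unfolding schwartz_plus_iff_chain by blast
  show ?thesis
    by (rule schwartz_chain_weighted_bound[OF D(1) _ assms(2-4)]) (use D(2) in auto)
qed

lemma wnorm_reverse_triangle:
  assumes "schwartz_plus \<psi>1" "schwartz_plus \<psi>2" "\<alpha> \<ge> 0" "p \<ge> 1"
  shows "\<bar>wnorm \<alpha> p \<psi>1 - wnorm \<alpha> p \<psi>2\<bar> \<le> wnorm \<alpha> p (\<lambda>t. \<psi>1 t - \<psi>2 t)"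
proof -
  obtain D1 D2 where "schwartz_chain D1" "\<forall>t\<ge>0. D1 0 t = \<psi>1 t" "schwartz_chain D2" "\<forall>t\<ge>0. D2 0 t = \<psi>2 t"
    using assms(1,2) unfolding schwartz_plus_iff_chain by blast
  then show ?thesis
    using wnorm_diff_le[OF assms(3,4), of D1 \<psi>1 D2 \<psi>2] by auto
qed

section \<open>Passing to the completion\<close>

lemma T_rep_wnorm_tendsto:
  assumes "T_rep \<alpha> p \<phi> f" "\<alpha> \<ge> 0" "p \<ge> 1"
  shows "(\<lambda>n. wnorm \<alpha> p (\<phi> n)) \<longlonglongrightarrow> T_norm_seq \<alpha> p \<phi>"
proof -
  have "Cauchy (\<lambda>n. wnorm \<alpha> p (\<phi> n))"
  proof (rule CauchyI)
    fix e :: real assume "e > 0"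
    with assms(1) obtain N where N: "\<forall>m\<ge>N. \<forall>n\<ge>N. wnorm \<alpha> p (\<lambda>t. \<phi> m t - \<phi> n t) < e"
      unfolding T_rep_def by blast
    have "\<bar>wnorm \<alpha> p (\<phi> m) - wnorm \<alpha> p (\<phi> n)\<bar> \<le> wnorm \<alpha> p (\<lambda>t. \<phi> m t - \<phi> n t)" for m n
      using assms by (intro wnorm_reverse_triangle) (auto simp: T_rep_def)
    with N show "\<exists>N. \<forall>m\<ge>N. \<forall>n\<ge>N. norm (wnorm \<alpha> p (\<phi> m) - wnorm \<alpha> p (\<phi> n)) < e"
      by (metis order_le_less_trans real_norm_def)
  qed
  then show ?thesis
    unfolding T_norm_seq_def by (simp add: Cauchy_convergent_iff convergent_LIMSEQ_iff)
qed

lemma T_rep_weighted_Cauchy: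
  assumes "T_rep \<alpha> p \<phi> f" "\<alpha> \<ge> 1" "p \<ge> 1" "e > 0"
  shows "\<exists>N. \<forall>m\<ge>N. \<forall>n\<ge>N. \<forall>t>0. t powr (1/p) * norm (\<phi> m t - \<phi> n t) \<le> e"
proof -
  define C where "C = \<alpha> * holder_tail_const p"
  have C: "C > 0" using assms holder_tail_const_pos by (simp add: C_def)
  obtain N where N: "\<forall>m\<ge>N. \<forall>n\<ge>N. wnorm \<alpha> p (\<lambda>t. \<phi> m t - \<phi> n t) < e / C"
    using assms(1) divide_pos_pos[OF \<open>e > 0\<close> C] unfolding T_rep_def by blast
  have "t powr (1/p) * norm (\<phi> m t - \<phi> n t) \<le> e" if "m \<ge> N" "n \<ge> N" "t > 0" for m n t
  proof -
    have "schwartz_plus (\<lambda>t. \<phi> m t - \<phi> n t)"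
      using assms(1) by (simp add: T_rep_def schwartz_plus_diff)
    then have "t powr (1/p) * norm (\<phi> m t - \<phi> n t) \<le> C * wnorm \<alpha> p (\<lambda>t. \<phi> m t - \<phi> n t)"
      using schwartz_plus_weighted_sup_bound[OF _ assms(2,3) \<open>t > 0\<close>] by (simp add: C_def)
    also have "\<dots> \<le> C * (e / C)" using N that C by (intro mult_left_mono less_imp_le) auto
    finally show ?thesis using C by simp
  qed
  then show ?thesis by blast
qed

lemma weighted_Cauchy_uniform_limit:
  fixes \<phi> :: "nat \<Rightarrow> real \<Rightarrow> 'a::banach"
  assumes r: "r \<ge> 0" and a: "a > 0"
    and cauchy: "\<And>e. e > 0 \<Longrightarrow> \<exists>N. \<forall>m\<ge>N. \<forall>n\<ge>N. \<forall>t>0. t powr r * norm (\<phi> m t - \<phi> n t) \<le> e"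
  shows "uniform_limit {a..} \<phi> (\<lambda>t. lim (\<lambda>n. \<phi> n t)) sequentially"
proof -
  have "uniformly_Cauchy_on {a..} \<phi>"
  proof (rule uniformly_Cauchy_onI)
    fix e :: real assume "e > 0"
    then have "a powr r * (e / 2) > 0"
      using a by simp
    then obtain N where N: "\<forall>m\<ge>N. \<forall>n\<ge>N. \<forall>t>0. t powr r * norm (\<phi> m t - \<phi> n t) \<le> a powr r * (e / 2)"
      using cauchy by blast
    have "dist (\<phi> m t) (\<phi> n t) < e" if "t \<in> {a..}" "m \<ge> N" "n \<ge> N" for t m n
    proof -
      have "a powr r * norm (\<phi> m t - \<phi> n t) \<le> t powr r * norm (\<phi> m t - \<phi> n t)"
        using that a r by (intro mult_right_mono powr_mono2) auto
      also have "\<dots> \<le> a powr r * (e / 2)" using N that a by (simp add: less_le_trans)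
      finally show ?thesis using a \<open>e > 0\<close> by (simp add: dist_norm)
    qed
    then show "\<exists>M. \<forall>t\<in>{a..}. \<forall>m\<ge>M. \<forall>n\<ge>M. dist (\<phi> m t) (\<phi> n t) < e" by blast
  qed
  then show ?thesis
    by (simp add: Cauchy_uniformly_convergent flip: uniformly_convergent_uniform_limit_iff)
qed

lemma continuous_on_pos_uniform_limit:
  fixes \<phi> :: "nat \<Rightarrow> real \<Rightarrow> 'a::real_normed_vector"
  assumes "\<And>n. continuous_on {0<..} (\<phi> n)" "\<And>a. a > 0 \<Longrightarrow> uniform_limit {a..} \<phi> g sequentially"
  shows "continuous_on {0<..} g"
proof -
  have "continuous_on {s/2<..} g" if "s > 0" for s
  proof (rule uniform_limit_theorem)
    show "\<forall>\<^sub>F n in sequentially. continuous_on {s/2<..} (\<phi> n)"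
      by (intro always_eventually allI continuous_on_subset[OF assms(1)]) (use that in auto)
    show "uniform_limit {s/2<..} \<phi> g sequentially"
      by (rule uniform_limit_on_subset[OF assms(2)[of "s/2"]]) (use that in auto)
  qed simp
  then show ?thesis
    unfolding continuous_on_eq_continuous_at[OF open_greaterThan] by auto
qed

lemma weighted_Cauchy_limit:
  fixes \<phi> :: "nat \<Rightarrow> real \<Rightarrow> 'a::banach"
  assumes r: "r \<ge> 0" and cont: "\<And>n. continuous_on {0<..} (\<phi> n)" and lim: "\<And>n. (\<phi> n \<longlongrightarrow> 0) at_top"
    and cauchy: "\<And>e. e > 0 \<Longrightarrow> \<exists>N. \<forall>m\<ge>N. \<forall>n\<ge>N. \<forall>t>0. t powr r * norm (\<phi> m t - \<phi> n t) \<le> e"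
  defines "g \<equiv> \<lambda>t. lim (\<lambda>n. \<phi> n t)"
  shows "continuous_on {0<..} g" and "(g \<longlongrightarrow> 0) at_top" and "\<And>t. t > 0 \<Longrightarrow> (\<lambda>n. \<phi> n t) \<longlonglongrightarrow> g t"
proof -
  have unif: "uniform_limit {a..} \<phi> g sequentially" if "a > 0" for a
    unfolding g_def by (rule weighted_Cauchy_uniform_limit[OF r that cauchy])
  show "continuous_on {0<..} g"
    using cont unif by (rule continuous_on_pos_uniform_limit)
  show "(g \<longlongrightarrow> 0) at_top"
    by (rule swap_uniform_limit'[OF always_eventually[OF allI[OF lim]] tendsto_const unif[of 1]])
       (simp_all add: eventually_ge_at_top)
  show "(\<lambda>n. \<phi> n t) \<longlonglongrightarrow> g t" if "t > 0" for t
    using unif[OF that] by (rule tendsto_uniform_limitI) simp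
qed

lemma AE_eq_Lp_limit_pointwise_limit:
  fixes \<phi> :: "nat \<Rightarrow> 'b \<Rightarrow> 'a::{banach, second_countable_topology}"
  assumes p: "p > 0"
    and [measurable]: "set_borel_measurable M A f" "set_borel_measurable M A g" "\<And>n. set_borel_measurable M A (\<phi> n)"
    and pointwise: "\<And>t. t \<in> A \<Longrightarrow> (\<lambda>n. \<phi> n t) \<longlonglongrightarrow> g t"
    and Lp: "(\<lambda>n. \<integral>\<^sup>+ t\<in>A. ennreal (norm (\<phi> n t - f t) powr p) \<partial>M) \<longlonglongrightarrow> 0"
  shows "AE t in M. t \<in> A \<longrightarrow> g t = f t"
proof -
  define h where "h n t = ennreal (norm (indicator A t *\<^sub>R \<phi> n t - indicator A t *\<^sub>R f t) powr p)" for n t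
  define G where "G t = ennreal (norm (indicator A t *\<^sub>R g t - indicator A t *\<^sub>R f t) powr p)" for t
  have [measurable]: "h n \<in> borel_measurable M" for n
    using assms(2-4) unfolding h_def set_borel_measurable_def by measurable
  have G_meas: "G \<in> borel_measurable M"
    using assms(2,3) unfolding G_def set_borel_measurable_def by measurable
  have "liminf (\<lambda>n. h n t) = G t" for t
  proof (cases "t \<in> A")
    case True
    then have "(\<lambda>n. h n t) \<longlonglongrightarrow> G t"
      unfolding h_def G_def
      by (intro tendsto_ennrealI tendsto_powr2 tendsto_intros pointwise) (auto simp: p)
    then show ?thesis by (intro lim_imp_Liminf) auto
  qed (use p in \<open>simp add: h_def G_def Liminf_const\<close>)
  then have "(\<integral>\<^sup>+ t. G t \<partial>M) \<le> liminf (\<lambda>n. \<integral>\<^sup>+ t. h n t \<partial>M)"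
    using nn_integral_liminf[of h] by simp
  also have "(\<lambda>n. \<integral>\<^sup>+ t. h n t \<partial>M) = (\<lambda>n. \<integral>\<^sup>+ t\<in>A. ennreal (norm (\<phi> n t - f t) powr p) \<partial>M)"
    by (intro ext nn_integral_cong) (auto simp: h_def indicator_def)
  also have "liminf \<dots> = 0"
    using Lp by (intro lim_imp_Liminf) auto
  finally have "AE t in M. G t = 0"
    using nn_integral_0_iff_AE[OF G_meas] by simp
  then show ?thesis
    by eventually_elim (auto simp: G_def)
qed

lemma T_rep_AE_eq_limit:
  assumes T: "T_rep \<alpha> p \<phi> f" and p: "p \<ge> 1"
    and cont: "\<And>n. continuous_on {0<..} (\<phi> n)" and g_cont: "continuous_on {0<..} g"
    and pointwise: "\<And>t. t > 0 \<Longrightarrow> (\<lambda>n. \<phi> n t) \<longlonglongrightarrow> g t"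
  shows "AE t in lborel. t > 0 \<longrightarrow> g t = f t"
proof -
  have measurable: "set_borel_measurable lborel {0<..} h" if "continuous_on {0<..} h" for h :: "real \<Rightarrow> complex"
    using that unfolding set_borel_measurable_def by (simp add: borel_measurable_continuous_on_indicator)
  have "AE t in lborel. t \<in> {0<..} \<longrightarrow> g t = f t"
  proof (rule AE_eq_Lp_limit_pointwise_limit[where \<phi>=\<phi> and p=p])
    show "set_borel_measurable lborel {0<..} f"
      and "(\<lambda>n. \<integral>\<^sup>+ t\<in>{0<..}. ennreal (norm (\<phi> n t - f t) powr p) \<partial>lborel) \<longlonglongrightarrow> 0"
      using T by (simp_all add: T_rep_def)
    show "set_borel_measurable lborel {0<..} g" "set_borel_measurable lborel {0<..} (\<phi> n)" for n
      by (intro measurable g_cont cont)+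
  qed (use p pointwise in simp_all)
  then show ?thesis
    by simp
qed

lemma T_rep_limit_weighted_bound:
  assumes T: "T_rep \<alpha> p \<phi> f" and "\<alpha> \<ge> 1" "p \<ge> 1" "t > 0"
    and lim: "(\<lambda>n. \<phi> n t) \<longlonglongrightarrow> x"
  shows "t powr (1 / p) * norm x \<le> \<alpha> * holder_tail_const p * T_norm_seq \<alpha> p \<phi>"
proof (rule LIMSEQ_le)
  show "(\<lambda>n. t powr (1 / p) * norm (\<phi> n t)) \<longlonglongrightarrow> t powr (1 / p) * norm x"
    by (intro tendsto_intros lim)
  show "(\<lambda>n. \<alpha> * holder_tail_const p * wnorm \<alpha> p (\<phi> n)) \<longlonglongrightarrow> \<alpha> * holder_tail_const p * T_norm_seq \<alpha> p \<phi>"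
    using assms by (intro tendsto_mult_left T_rep_wnorm_tendsto[OF T]) auto
  show "\<exists>N. \<forall>n\<ge>N. t powr (1 / p) * norm (\<phi> n t) \<le> \<alpha> * holder_tail_const p * wnorm \<alpha> p (\<phi> n)"
  proof -
    have "schwartz_plus (\<phi> n)" for n
      using T by (simp add: T_rep_def)
    then show ?thesis
      using schwartz_plus_weighted_sup_bound[OF _ assms(2-4)] by blast
  qed
qed

theorem proposition2p4:
  fixes p \<alpha> :: real
  assumes "p \<ge> 1" and "\<alpha> \<ge> 1"
  shows "\<exists>C. \<forall>f \<phi>. T_rep \<alpha> p \<phi> f \<longrightarrow>
           (\<exists>g. continuous_on {0<..} g \<and>
                (AE t in lborel. t > 0 \<longrightarrow> g t = f t) \<and>
                (g \<longlongrightarrow> 0) at_top \<and>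
                (\<forall>t>0. t powr (1 / p) * norm (g t) \<le> C * T_norm_seq \<alpha> p \<phi>))"
proof (rule exI[of _ "\<alpha> * holder_tail_const p"], intro allI impI)
  fix f \<phi> assume T: "T_rep \<alpha> p \<phi> f"
  define g where "g t = lim (\<lambda>n. \<phi> n t)" for t
  have schwartz: "schwartz_plus (\<phi> n)" for n
    using T by (simp add: T_rep_def)
  have cont: "continuous_on {0<..} (\<phi> n)" for n
    by (rule continuous_on_subset[OF schwartz_plus_continuous_on[OF schwartz]]) auto
  have limit: "continuous_on {0<..} g" "(g \<longlongrightarrow> 0) at_top" "\<And>t. t > 0 \<Longrightarrow> (\<lambda>n. \<phi> n t) \<longlonglongrightarrow> g t"
    using weighted_Cauchy_limit[OF _ cont schwartz_plus_tendsto_0[OF schwartz] T_rep_weighted_Cauchy[OF T assms(2,1)]]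
      assms(1) unfolding g_def[abs_def] by simp_all
  have AE_eq: "AE t in lborel. t > 0 \<longrightarrow> g t = f t"
    by (rule T_rep_AE_eq_limit[OF T assms(1) cont limit(1,3)])
  have bound: "t powr (1 / p) * norm (g t) \<le> \<alpha> * holder_tail_const p * T_norm_seq \<alpha> p \<phi>" if "t > 0" for t
    by (rule T_rep_limit_weighted_bound[OF T assms(2,1) that limit(3)[OF that]])
  show "\<exists>g. continuous_on {0<..} g \<and> (AE t in lborel. t > 0 \<longrightarrow> g t = f t) \<and>
      (g \<longlongrightarrow> 0) at_top \<and> (\<forall>t>0. t powr (1 / p) * norm (g t) \<le> \<alpha> * holder_tail_const p * T_norm_seq \<alpha> p \<phi>)"
    by (intro exI[of _ g] conjI limit(1,2) AE_eq allI impI bound)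
qed

end
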